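(* Consider the closed-loop system described in the context, with the switching controller defined as follows: fix $\Delta_{\min}=:\Delta_0<\Delta_1<\dots<\Delta_r:=\Delta_{\max}$, set $\mathcal{E}_1:=[\Delta_0,\Delta_1]$ and $\mathcal{E}_p:=(\Delta_{p-1},\Delta_p]$ for $p=2,\dots,r$, let $K_1,\dots,K_r\in\mathbb{R}^{n_u\times n_y}$ be given, and let $u[k]=K_p\tilde y[k]$ whenever $E[k]\in\mathcal{E}_p$. Let $\sigma\in(0,1]$ and $\gamma>0$. For $\bm j=(j_1,\dots,j_{n_y})\in\mathcal{J}_{n_y}$ let $\Lambda_{\bm j}:=\mathrm{diag}(\lambda_1 j_1,\dots,\lambda_{n_y}j_{n_y})$. Suppose there exist a positive definite matrix $P\in\mathbb{R}^{n_x\times n_x}$ and, for $p=1,\dots,r$ and $\bm j\in\mathcal{J}_{n_y}$, symmetric matrices with nonnegative entries $$\begin{bmatrix} L_{p,\bm j} & N_{p,\bm j}\\ N_{p,\bm j}^{\top} & M_{p,\bm j}\end{bmatrix}\in\mathbb{R}^{2n_y\times 2n_y}\quad(L_{p,\bm j},M_{p,\bm j},N_{p,\bm j}\in\mathbb{R}^{n_y\times n_y}),$$ and symmetric matrices $Z_{p,\bm j}\in\mathbb{R}^{n_y\times n_y}$, such that for every $p=1,\dots,r$ and every $\bm j\in\mathcal{J}_{n_y}$, $$\begin{bmatrix}\Gamma_{p,\bm j} & \Phi_{p,\bm j}\\ \Phi_{p,\bm j}^{\top} & \Xi_{p,\bm j}\end{bmatrix}\succ 0,$$ where $N^+_{p,\bm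 j}:=N_{p,\bm j}+N_{p,\bm j}^{\top}$, $N^-_{p,\bm j}:=N_{p,\bm j}-N_{p,\bm j}^{\top}$, $$R_{p,\bm j}:=\begin{bmatrix} L_{p,\bm j}+M_{p,\bm j}+N^+_{p,\bm j} & L_{p,\bm j}-M_{p,\bm j}-N^-_{p,\bm j}\\ (L_{p,\bm j}-M_{p,\bm j}-N^-_{p,\bm j})^{\top} & L_{p,\bm j}+M_{p,\bm j}+Z_{p,\bm j}\end{bmatrix},$$ $\Gamma_{p,\bm j}:=\mathrm{diag}(\sigma^2P,\ \gamma^2 I_{n_w},\ N^+_{p,\bm j}+Z_{p,\bm j})$, $\Xi_{p,\bm j}:=\mathrm{diag}(P,\ I_{n_z},\ R_{p,\bm j})$, and $$\Phi_{p,\bm j}:=\begin{bmatrix} A+BK_pC & BK_pD & BK_p\\ F&0&0\\ \Delta_p\Lambda_{\bm j}C & \Delta_p\Lambda_{\bm j}D & 0\\ 0&0&I_{n_y}\end{bmatrix}^{\top}\Xi_{p,\bm j}.$$ Then: (i) the closed-loop system is practically stable with an ultimate bound of the form $\eta=\rho\cdot\max_{i=1,\dots,n_y}\big((\Delta_{\max}\lambda_i+1)\bar w\|D\|_\infty+\delta_i\big)$ for some $\rho\ge 0$, i.e., for every $\bar w\ge0$, $\|w[k]\|_\infty\le\bar w$ for all $k\in\mathbb{Z}_+$ implies $\limsup_{k\to\infty}\|x[k]\|\le\eta$; (ii) the closed-loop system has decay rate $\sigma$; and (iii) its $\ell^2$-gain from $w$ to $z$ is less than or equal to $\gamma$.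
   Context: Plant (discrete time, $k\in\mathbb{Z}_+$): $x[k+1]=Ax[k]+Bu[k]$, $y[k]=Cx[k]+Dw[k]$, $z[k]=Fx[k]$, with $x[k]\in\mathbb{R}^{n_x}$, $u[k]\in\mathbb{R}^{n_u}$, $y[k]=[y_1[k],\dots,y_{n_y}[k]]^\top\in\mathbb{R}^{n_y}$, noise $w[k]\in\mathbb{R}^{n_w}$, performance output $z[k]\in\mathbb{R}^{n_z}$. Event-triggered try-once-discard protocol: fix $\Delta_{\max}>\Delta_{\min}\ge0$, $\lambda_i>0$, $\delta_i\ge0$ ($i=1,\dots,n_y$). Let $l^i_k$ be the latest time $\le k$ at which $y_i$ was transmitted (with some stored initial released value). At each $k$, compute $e_i'[k]:=y_i[l^i_{k-1}]-y_i[k]$ and $E_i':=\frac{|e_i'[k]|-\delta_i}{\lambda_i|y_i[k]|}$ (convention: $\alpha/0=+\infty$ for $\alpha>0$, $\beta/0=-\infty$ for $\beta\le0$). Rule: if $\max_iE_i'<\Delta_{\min}$, nothing is transmitted; if $\max_iE_i'\ge\Delta_{\max}$, all $y_i[k]$ with $E_i'\ge\Delta_{\max}$ are transmitted; otherwise a single $y_i[k]$ achieving $E_i'=\max_iE_i'$ is transmitted (any one if ties). If $y_i[k]$ is transmitted then $l^i_k=k$, otherwise $l^i_k=l^i_{k-1}$. Define $E[k]:=\Delta_{\min}$ if $\max_iE_i'<\Delta_{\min}$, $E[k]:=\Delta_{\max}$ if $\max_iE_i'\ge\Delta_{\max}$, and $E[k]:=\max_iE_i'$ otherwise. Let $\tilde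 y[k]:=[y_1[l^1_k],\dots,y_{n_y}[l^{n_y}_k]]^\top$; the controller is $u[k]=K(E[k])\tilde y[k]$. Notation: $\|\cdot\|$ Euclidean norm; $\|v\|_\infty=\max_i|v_i|$ and $\|D\|_\infty$ is the induced matrix norm; $\mathcal{J}_n:=\{(j_1,\dots,j_n): j_p\in\{1,-1\}\}$; $\succ0$ means symmetric positive definite; $\ell^2$ is the space of square-summable sequences on $\mathbb{Z}_+$ with $\|v\|_{\ell^2}=(\sum_k v[k]^\top v[k])^{1/2}$. Definitions: the closed-loop system is practically stable if for every $\bar w\ge0$ there is $\eta\ge0$ with $\|w[k]\|_\infty\le\bar w\ \forall k\Rightarrow\limsup_{k\to\infty}\|x[k]\|\le\eta$. It has decay rate $\sigma$ if there is $M\ge1$ such that whenever $w[k]=0$ for all $k$ and $\delta_i=0$ for all $i$, $\|x[k]\|\le M\sigma^k\|x[0]\|$ for all $k\in\mathbb{Z}_+$. Its $\ell^2$-gain (for $w\in\ell^2$) is at most $\gamma$ if, whenever $x[0]=0$ and $\delta_i=0$ for all $i$, $z\in\ell^2$ and $\|z\|_{\ell^2}\le\gamma\|w\|_{\ell^2}$. *)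

theory Defs
  imports "Jordan_Normal_Form.Matrix" "HOL-Library.Extended_Real" "HOL-Library.Liminf_Limsup"
begin

definition sym_mat :: "real mat \<Rightarrow> bool" where
  "sym_mat M \<longleftrightarrow> dim_row M = dim_col M \<and> transpose_mat M = M"

definition pos_def :: "real mat \<Rightarrow> bool" where
  "pos_def M \<longleftrightarrow> sym_mat M \<and>
     (\<forall>v \<in> carrier_vec (dim_row M). v \<noteq> 0\<^sub>v (dim_row M) \<longrightarrow> v \<bullet> (M *\<^sub>v v) > 0)"

definition nonneg_mat :: "real mat \<Rightarrow> bool" where
  "nonneg_mat M \<longleftrightarrow> (\<forall>i < dim_row M. \<forall>j < dim_col M. M $$ (i,j) \<ge> 0)"

definition bdiag :: "real mat \<Rightarrow> real mat \<Rightarrow> real mat" where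
  "bdiag A B = four_block_mat A (0\<^sub>m (dim_row A) (dim_col B)) (0\<^sub>m (dim_row B) (dim_col A)) B"

definition hcat :: "real mat \<Rightarrow> real mat \<Rightarrow> real mat" where
  "hcat A B = mat (dim_row A) (dim_col A + dim_col B)
     (\<lambda>(i,j). if j < dim_col A then A $$ (i,j) else B $$ (i, j - dim_col A))"

definition vnorm :: "real vec \<Rightarrow> real" where
  "vnorm v = sqrt (\<Sum>i<dim_vec v. (v $ i)^2)"

definition vinf :: "real vec \<Rightarrow> real" where
  "vinf v = Max (insert 0 {\<bar>v $ i\<bar> | i. i < dim_vec v})"

definition minf :: "real mat \<Rightarrow> real" where
  "minf D = Sup {vinf (D *\<^sub>v v) | v. v \<in> carrier_vec (dim_col D) \<and> vinf v \<le> 1}"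

definition l2norm :: "(nat \<Rightarrow> real vec) \<Rightarrow> real" where
  "l2norm f = sqrt (\<Sum>k. (vnorm (f k))^2)"

definition in_l2 :: "(nat \<Rightarrow> real vec) \<Rightarrow> bool" where
  "in_l2 f \<longleftrightarrow> summable (\<lambda>k. (vnorm (f k))^2)"

text \<open>E'_i = (|e| - delta)/(lambda |y|), with alpha/0 = +inf for alpha > 0, -inf for alpha <= 0.\<close>
definition Eprime :: "real \<Rightarrow> real \<Rightarrow> real \<Rightarrow> real \<Rightarrow> ereal" where
  "Eprime e del lam y =
     (if y = 0 then (if \<bar>e\<bar> - del > 0 then \<infinity> else -\<infinity>)
      else ereal ((\<bar>e\<bar> - del) / (lam * \<bar>y\<bar>)))"

text \<open>One step of the try-once-discard protocol: given the previously held values yp,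
  the current output y, it relates the new held values yn and the value E[k].\<close>
definition protocol_step ::
  "nat \<Rightarrow> (nat \<Rightarrow> real) \<Rightarrow> (nat \<Rightarrow> real) \<Rightarrow> real \<Rightarrow> real \<Rightarrow>
   real vec \<Rightarrow> real vec \<Rightarrow> real vec \<Rightarrow> real \<Rightarrow> bool" where
  "protocol_step ny lam del dmin dmax yp y yn E \<longleftrightarrow>
     (let Ep = (\<lambda>i. Eprime (yp $ i - y $ i) (del i) (lam i) (y $ i));
          m = Max (Ep ` {..<ny})
      in \<exists>T \<subseteq> {..<ny}.
           (if m < ereal dmin then T = {} \<and> E = dmin
            else if m \<ge> ereal dmax then T = {i \<in> {..<ny}. Ep i \<ge> ereal dmax} \<and> E = dmax
            else (\<exists>i0 < ny. Ep i0 = m \<and> T = {i0}) \<and> E = real_of_ereal m)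
           \<and> yn = vec ny (\<lambda>i. if i \<in> T then y $ i else yp $ i))"

definition Eint :: "(nat \<Rightarrow> real) \<Rightarrow> nat \<Rightarrow> real set" where
  "Eint Dl p = (if p = 1 then {Dl 0 .. Dl 1} else {Dl (p - 1) <.. Dl p})"

text \<open>Closed-loop trajectory: state x, input u, noise w, held outputs yh (= tilde y),
  initial stored released values yinit, and the signal E.\<close>
definition cl_traj ::
  "nat \<Rightarrow> nat \<Rightarrow> nat \<Rightarrow> nat \<Rightarrow> real mat \<Rightarrow> real mat \<Rightarrow> real mat \<Rightarrow> real mat \<Rightarrow>
   (nat \<Rightarrow> real) \<Rightarrow> nat \<Rightarrow> (nat \<Rightarrow> real mat) \<Rightarrow> (nat \<Rightarrow> real) \<Rightarrow> (nat \<Rightarrow> real) \<Rightarrow>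
   (nat \<Rightarrow> real vec) \<Rightarrow> real vec \<Rightarrow> (nat \<Rightarrow> real vec) \<Rightarrow> (nat \<Rightarrow> real vec) \<Rightarrow>
   (nat \<Rightarrow> real vec) \<Rightarrow> (nat \<Rightarrow> real) \<Rightarrow> bool" where
  "cl_traj nx nu ny nw A B C D Dl r K lam del w yinit x u yh Ev \<longleftrightarrow>
     yinit \<in> carrier_vec ny \<and>
     (\<forall>k. w k \<in> carrier_vec nw \<and> x k \<in> carrier_vec nx \<and> u k \<in> carrier_vec nu
          \<and> yh k \<in> carrier_vec ny) \<and>
     (\<forall>k. x (Suc k) = A *\<^sub>v x k + B *\<^sub>v u k) \<and>
     (\<forall>k. protocol_step ny lam del (Dl 0) (Dl r)
            (if k = 0 then yinit else yh (k - 1)) (C *\<^sub>v x k + D *\<^sub>v w k) (yh k) (Ev k)) \<and>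
     (\<forall>k p. 1 \<le> p \<and> p \<le> r \<and> Ev k \<in> Eint Dl p \<longrightarrow> u k = K p *\<^sub>v yh k)"

definition Jset :: "nat \<Rightarrow> real list set" where
  "Jset n = {j. length j = n \<and> set j \<subseteq> {1, -1}}"

definition Lam :: "nat \<Rightarrow> (nat \<Rightarrow> real) \<Rightarrow> real list \<Rightarrow> real mat" where
  "Lam ny lam j = mat ny ny (\<lambda>(i,i'). if i = i' then lam i * j ! i else 0)"

definition LMI_mat ::
  "nat \<Rightarrow> nat \<Rightarrow> nat \<Rightarrow> nat \<Rightarrow> nat \<Rightarrow>
   real mat \<Rightarrow> real mat \<Rightarrow> real mat \<Rightarrow> real mat \<Rightarrow> real mat \<Rightarrow> real mat \<Rightarrow>
   real \<Rightarrow> real mat \<Rightarrow> real \<Rightarrow> real \<Rightarrow> real mat \<Rightarrow>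
   real mat \<Rightarrow> real mat \<Rightarrow> real mat \<Rightarrow> real mat \<Rightarrow> real mat" where
  "LMI_mat nx nu ny nw nz A B C D F Kp Dp Lj sigma gamma P L M N Z =
     (let Np = N + transpose_mat N; Nm = N - transpose_mat N;
          R = four_block_mat (L + M + Np) (L - M - Nm) (transpose_mat (L - M - Nm)) (L + M + Z);
          Gam = bdiag ((sigma^2) \<cdot>\<^sub>m P) (bdiag ((gamma^2) \<cdot>\<^sub>m 1\<^sub>m nw) (Np + Z));
          Xi = bdiag P (bdiag (1\<^sub>m nz) R);
          G = hcat (hcat (A + B * Kp * C) (B * Kp * D)) (B * Kp)
              @\<^sub>r hcat (hcat F (0\<^sub>m nz nw)) (0\<^sub>m nz ny)
              @\<^sub>r hcat (hcat (Dp \<cdot>\<^sub>m (Lj * C)) (Dp \<cdot>\<^sub>m (Lj * D))) (0\<^sub>m ny ny)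
              @\<^sub>r hcat (hcat (0\<^sub>m ny nx) (0\<^sub>m ny nw)) (1\<^sub>m ny);
          Phi = transpose_mat G * Xi
      in four_block_mat Gam Phi (transpose_mat Phi) Xi)"

end

(*
  Take V x = x^T P x. After each step the protocol guarantees the sector bound
  |y~_i - y_i| <= Delta_p lambda_i |y_i| + delta_i for the active controller p. Without noise
  and with delta = 0, choose the sign pattern j of y; then s = Delta_p Lambda_j y dominates
  e = y~ - y entrywise, so the S-procedure term built from L, M, N is nonnegative, and evaluating
  the LMI at (v, -G v) with v = (x, w, e) gives the dissipation inequality
  V(x+) + |z|^2 <= sigma^2 V(x) + gamma^2 |w|^2. Iterating it gives the decay rate, summing it
  the l2-gain. With noise, e splits into a part in the sector of C x and a remainder bounded by
  (Delta_max lambda_i + 1) |D w|_i + delta_i; the LMI holds with a strict margin, so sqrt V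
  contracts by a fixed factor below 1 up to a term proportional to the remainder, which yields
  the ultimate bound.
*)
theory Submission
  imports Defs "HOL-Analysis.Convex" "HOL-Analysis.L2_Norm"
begin

(* HOL-Analysis' inner product would otherwise share the symbol \<bullet> with the scalar product of vectors. *)
unbundle no inner_syntax

section \<open>Quadratic forms on \<open>\<real>\<^sup>n\<close>\<close>

definition qform :: "nat \<Rightarrow> (nat \<Rightarrow> nat \<Rightarrow> real) \<Rightarrow> (nat \<Rightarrow> real) \<Rightarrow> real" where
  "qform n P x = (\<Sum>i<n. \<Sum>j<n. P i j * x i * x j)"

definition bform :: "nat \<Rightarrow> (nat \<Rightarrow> nat \<Rightarrow> real) \<Rightarrow> (nat \<Rightarrow> real) \<Rightarrow> (nat \<Rightarrow> real) \<Rightarrow> real" where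
  "bform n P x y = (\<Sum>i<n. \<Sum>j<n. P i j * x i * y j)"

lemma qform_cong: "(\<And>i. i < n \<Longrightarrow> x i = y i) \<Longrightarrow> qform n P x = qform n P y"
  unfolding qform_def by (intro sum.cong) auto

lemma qform_Suc:
  assumes sym: "\<forall>i<Suc n. \<forall>j<Suc n. P i j = P j i"
  shows "qform (Suc n) P x = qform n P x + 2 * x n * (\<Sum>i<n. P n i * x i) + P n n * (x n)^2"
proof -
  have "qform (Suc n) P x = qform n P x + (\<Sum>i<n. P i n * x i * x n) + (\<Sum>j<n. P n j * x n * x j)
      + P n n * x n * x n"
    unfolding qform_def by (simp add: sum.distrib)
  also have "(\<Sum>i<n. P i n * x i * x n) = x n * (\<Sum>i<n. P n i * x i)"
    unfolding sum_distrib_left using sym by (intro sum.cong) auto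
  also have "(\<Sum>j<n. P n j * x n * x j) = x n * (\<Sum>i<n. P n i * x i)"
    unfolding sum_distrib_left by (intro sum.cong) auto
  finally show ?thesis by (simp add: power2_eq_square algebra_simps)
qed

lemma qform_Suc_Schur:
  assumes sym: "\<forall>i<Suc n. \<forall>j<Suc n. P i j = P j i" and pivot: "P n n \<noteq> 0"
  shows "qform (Suc n) P x = P n n * (x n + (\<Sum>i<n. P n i * x i) / P n n)^2
           + qform n (\<lambda>i j. P i j - P n i * P n j / P n n) x"
proof -
  define a b where "a = P n n" and "b = (\<Sum>i<n. P n i * x i)"
  have b_sq: "b^2 = (\<Sum>i<n. \<Sum>j<n. (P n i * x i) * (P n j * x j))"
    unfolding b_def power2_eq_square by (rule sum_product)
  have "qform n (\<lambda>i j. P i j - P n i * P n j / a) x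
      = (\<Sum>i<n. \<Sum>j<n. P i j * x i * x j - (P n i * x i) * (P n j * x j) / a)"
    unfolding qform_def using pivot by (intro sum.cong refl) (simp add: a_def field_simps)
  also have "\<dots> = qform n P x - b^2 / a"
    unfolding qform_def b_sq by (simp add: sum_subtractf sum_divide_distrib)
  finally have Schur: "qform n (\<lambda>i j. P i j - P n i * P n j / a) x = qform n P x - b^2 / a" .
  have "a * (x n + b / a)^2 = a * (x n)^2 + 2 * x n * b + b^2 / a"
    using pivot by (simp add: a_def field_simps power2_eq_square)
  then show ?thesis
    using qform_Suc[OF sym, of x] Schur unfolding a_def[symmetric] b_def[symmetric] by linarith
qed

lemma sum_squares_Suc_le:
  fixes x p :: "nat \<Rightarrow> real"
  assumes "a \<noteq> 0"
  shows "(\<Sum>i<Suc n. (x i)^2)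
    \<le> 2 * (x n + (\<Sum>i<n. p i * x i) / a)^2 + (1 + 2 * (\<Sum>i<n. (p i)^2) / a^2) * (\<Sum>i<n. (x i)^2)"
proof -
  define u where "u = (\<Sum>i<n. p i * x i) / a"
  have "u^2 \<le> (\<Sum>i<n. (p i)^2) * (\<Sum>i<n. (x i)^2) / a^2"
    using Cauchy_Schwarz_ineq_sum[of p x "{..<n}"] by (simp add: u_def power_divide divide_right_mono)
  moreover have "(x n)^2 \<le> 2 * (x n + u)^2 + 2 * u^2"
    using zero_le_power2[of "x n + 2 * u"] by (simp add: power2_eq_square algebra_simps)
  ultimately show ?thesis unfolding u_def[symmetric] by (simp add: algebra_simps)
qed

text \<open>Induction on \<open>n\<close>: the last pivot is positive, and its Schur complement is again
  positive definite.\<close>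
lemma qform_coercive:
  assumes "\<forall>i<n. \<forall>j<n. P i j = P j i"
    and "\<And>x. \<exists>i<n. x i \<noteq> 0 \<Longrightarrow> 0 < qform n P x"
  shows "\<exists>c>0. \<forall>x. c * (\<Sum>i<n. (x i)^2) \<le> qform n P x"
  using assms
proof (induction n arbitrary: P)
  case 0
  then show ?case by (intro exI[of _ 1]) (simp add: qform_def)
next
  case (Suc n)
  define a where "a = P n n"
  define b where "b = (\<lambda>x. \<Sum>i<n. P n i * x i)"
  define S where "S = (\<lambda>i j. P i j - P n i * P n j / a)"
  have "0 < qform (Suc n) P (\<lambda>i. if i = n then 1 else 0)"
    by (rule Suc.prems(2)) auto
  then have a_pos: "0 < a"
    using qform_Suc[OF Suc.prems(1)] by (simp add: a_def qform_def)
  have split: "qform (Suc n) P x = a * (x n + b x / a)^2 + qform n S x" for x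
    using qform_Suc_Schur[OF Suc.prems(1)] a_pos by (simp add: a_def b_def S_def)
  have S_sym: "\<forall>i<n. \<forall>j<n. S i j = S j i"
    using Suc.prems(1) by (auto simp: S_def mult.commute)
  have S_pos: "0 < qform n S x" if "\<exists>i<n. x i \<noteq> 0" for x
  proof -
    define x' where "x' = x(n := - b x / a)"
    have "0 < qform (Suc n) P x'"
      using that by (intro Suc.prems(2)) (auto simp: x'_def)
    moreover have "b x' = b x" "qform n S x' = qform n S x"
      by (auto simp: b_def x'_def intro!: sum.cong qform_cong)
    ultimately show ?thesis using split[of x'] a_pos by (simp add: x'_def)
  qed
  obtain c' where c': "0 < c'" "\<forall>x. c' * (\<Sum>i<n. (x i)^2) \<le> qform n S x"
    using Suc.IH[OF S_sym S_pos] by blast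
  define k where "k = (\<Sum>i<n. (P n i)^2)"
  define c where "c = min (a/2) (c' / (1 + 2 * k / a^2))"
  have k_nonneg: "0 \<le> k" unfolding k_def by (simp add: sum_nonneg)
  then have den_pos: "0 < 1 + 2 * k / a^2" by (simp add: add_pos_nonneg)
  show ?case
  proof (intro exI[of _ c] conjI allI)
    show "0 < c" unfolding c_def using a_pos c' den_pos by simp
    fix x :: "nat \<Rightarrow> real"
    define t where "t = x n + b x / a"
    define s where "s = (\<Sum>i<n. (x i)^2)"
    have sum_le: "(\<Sum>i<Suc n. (x i)^2) \<le> 2 * t^2 + (1 + 2 * k / a^2) * s"
      using sum_squares_Suc_le[where a = a and n = n and p = "\<lambda>i. P n i" and x = x] a_pos
      unfolding t_def s_def k_def b_def by simp
    have "c * (\<Sum>i<Suc n. (x i)^2) \<le> (2 * c) * t^2 + (c * (1 + 2 * k / a^2)) * s"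
      using mult_left_mono[OF sum_le, of c] \<open>0 < c\<close> by (simp add: algebra_simps)
    also have "\<dots> \<le> a * t^2 + c' * s"
    proof (rule add_mono)
      show "(2 * c) * t^2 \<le> a * t^2" unfolding c_def by (intro mult_right_mono) auto
      have "c * (1 + 2 * k / a^2) \<le> c'"
        unfolding c_def using den_pos by (metis min.cobounded2 mult.commute pos_le_divide_eq)
      then show "(c * (1 + 2 * k / a^2)) * s \<le> c' * s"
        unfolding s_def by (intro mult_right_mono) (auto intro: sum_nonneg)
    qed
    also have "\<dots> \<le> qform (Suc n) P x"
      using split[of x] c'(2) unfolding t_def s_def by (simp add: add_left_mono)
    finally show "c * (\<Sum>i<Suc n. (x i)^2) \<le> qform (Suc n) P x" .
  qed
qed

lemma qform_le_sum_squares: "\<exists>c>0. \<forall>x. qform n P x \<le> c * (\<Sum>i<n. (x i)^2)"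
proof (intro exI[of _ "(\<Sum>i<n. \<Sum>j<n. \<bar>P i j\<bar>) + 1"] conjI allI)
  show "0 < (\<Sum>i<n. \<Sum>j<n. \<bar>P i j\<bar>) + 1" by (simp add: add_nonneg_pos sum_nonneg)
  fix x :: "nat \<Rightarrow> real"
  define s where "s = (\<Sum>i<n. (x i)^2)"
  have s_nonneg: "0 \<le> s" unfolding s_def by (simp add: sum_nonneg)
  have sq_le: "(x i)^2 \<le> s" if "i < n" for i
    unfolding s_def using that by (intro member_le_sum) auto
  have "qform n P x \<le> (\<Sum>i<n. \<Sum>j<n. \<bar>P i j\<bar> * s)"
    unfolding qform_def
  proof (intro sum_mono)
    fix i j assume "i \<in> {..<n}" "j \<in> {..<n}"
    then have "2 * \<bar>x i * x j\<bar> \<le> 2 * s"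
      using zero_le_power2[of "\<bar>x i\<bar> - \<bar>x j\<bar>"] sq_le[of i] sq_le[of j]
      by (simp add: power2_diff abs_mult)
    then have "\<bar>P i j\<bar> * \<bar>x i * x j\<bar> \<le> \<bar>P i j\<bar> * s" by (simp add: mult_left_mono)
    then show "P i j * x i * x j \<le> \<bar>P i j\<bar> * s"
      by (metis abs_ge_self abs_mult mult.assoc order_trans)
  qed
  also have "\<dots> = (\<Sum>i<n. \<Sum>j<n. \<bar>P i j\<bar>) * s" by (simp add: sum_distrib_right)
  also have "\<dots> \<le> ((\<Sum>i<n. \<Sum>j<n. \<bar>P i j\<bar>) + 1) * s"
    using s_nonneg by (simp add: distrib_right)
  finally show "qform n P x \<le> ((\<Sum>i<n. \<Sum>j<n. \<bar>P i j\<bar>) + 1) * (\<Sum>i<n. (x i)^2)"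
    unfolding s_def .
qed

lemma qform_add_smult:
  assumes sym: "\<forall>i<n. \<forall>j<n. P i j = P j i"
  shows "qform n P (\<lambda>i. x i + t * y i) = qform n P x + 2 * t * bform n P x y + t^2 * qform n P y"
proof -
  have swap: "(\<Sum>i<n. \<Sum>j<n. P i j * y i * x j) = bform n P x y"
    unfolding bform_def by (subst sum.swap) (intro sum.cong refl, simp add: sym ac_simps)
  have "qform n P (\<lambda>i. x i + t * y i) = (\<Sum>i<n. \<Sum>j<n. P i j * x i * x j + t * (P i j * x i * y j)
       + t * (P i j * y i * x j) + t^2 * (P i j * y i * y j))"
    unfolding qform_def by (intro sum.cong refl) (simp add: algebra_simps power2_eq_square)
  also have "\<dots> = qform n P x + t * bform n P x y + t * (\<Sum>i<n. \<Sum>j<n. P i j * y i * x j)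
      + t^2 * qform n P y"
    unfolding qform_def bform_def by (simp add: sum.distrib sum_distrib_left)
  finally show ?thesis unfolding swap by simp
qed

lemma bform_Cauchy_Schwarz:
  assumes sym: "\<forall>i<n. \<forall>j<n. P i j = P j i" and psd: "\<And>z. 0 \<le> qform n P z"
  shows "(bform n P x y)^2 \<le> qform n P x * qform n P y"
proof -
  define a b q where "a = qform n P x" and "b = bform n P x y" and "q = qform n P y"
  have quad: "0 \<le> a + 2 * t * b + t^2 * q" for t
    using psd[of "\<lambda>i. x i + t * y i"] unfolding qform_add_smult[OF sym] a_def b_def q_def .
  have "b^2 \<le> a * q"
  proof (cases "q = 0")
    case True
    have "b = 0"
    proof (rule ccontr)
      assume "b \<noteq> 0"
      have "0 \<le> a + 2 * (- (a + 1) / (2 * b)) * b + (- (a + 1) / (2 * b))^2 * q" by (rule quad)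
      also have "\<dots> = -1" using \<open>b \<noteq> 0\<close> True by (simp add: field_simps)
      finally show False by simp
    qed
    then show ?thesis using True by simp
  next
    case False
    with psd have q_pos: "0 < q" unfolding q_def by (simp add: order_less_le)
    have "0 \<le> a + 2 * (- b / q) * b + (- b / q)^2 * q" by (rule quad)
    also have "\<dots> = a - b^2 / q" using q_pos by (simp add: field_simps power2_eq_square)
    finally show ?thesis using q_pos by (simp add: divide_le_eq)
  qed
  then show ?thesis unfolding a_def b_def q_def .
qed

lemma sqrt_qform_add_le:
  assumes sym: "\<forall>i<n. \<forall>j<n. P i j = P j i" and psd: "\<And>z. 0 \<le> qform n P z"
  shows "sqrt (qform n P (\<lambda>i. x i + y i)) \<le> sqrt (qform n P x) + sqrt (qform n P y)"
proof -
  have "bform n P x y \<le> sqrt (qform n P x) * sqrt (qform n P y)"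
    using real_sqrt_le_mono[OF bform_Cauchy_Schwarz[OF sym psd, of x y]]
    by (simp add: real_sqrt_mult)
  then have "qform n P (\<lambda>i. x i + y i) \<le> (sqrt (qform n P x) + sqrt (qform n P y))^2"
    using qform_add_smult[OF sym, of x 1 y] psd[of x] psd[of y] by (simp add: power2_sum)
  then show ?thesis
    using psd[of x] psd[of y] by (metis real_le_lsqrt add_nonneg_nonneg real_sqrt_ge_zero)
qed

lemma scalar_prod_mult_mat_vec_sum:
  fixes X :: "real mat"
  assumes X: "X \<in> carrier_mat n m" and u: "u \<in> carrier_vec n" and w: "w \<in> carrier_vec m"
  shows "u \<bullet> (X *\<^sub>v w) = (\<Sum>i<n. \<Sum>j<m. u $ i * X $$ (i,j) * w $ j)"
  using X u w by (simp add: scalar_prod_def atLeast0LessThan sum_distrib_left mult.assoc)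

lemma scalar_prod_mult_mat_vec_eq_qform:
  fixes P :: "real mat"
  assumes "P \<in> carrier_mat n n" and "v \<in> carrier_vec n"
  shows "v \<bullet> (P *\<^sub>v v) = qform n (\<lambda>i j. P $$ (i,j)) (\<lambda>i. v $ i)"
  unfolding scalar_prod_mult_mat_vec_sum[OF assms assms(2)] qform_def
  by (intro sum.cong refl) (simp add: ac_simps)

lemma qform_eq_scalar_prod_vec:
  fixes P :: "real mat"
  assumes "P \<in> carrier_mat n n"
  shows "qform n (\<lambda>i j. P $$ (i,j)) x = vec n x \<bullet> (P *\<^sub>v vec n x)"
  unfolding scalar_prod_mult_mat_vec_eq_qform[OF assms vec_carrier] by (rule qform_cong) simp

lemma scalar_prod_self: "v \<bullet> v = (\<Sum>i<dim_vec v. (v $ i :: real)^2)"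
  by (simp add: scalar_prod_def atLeast0LessThan power2_eq_square)

lemma scalar_prod_self_nonneg: "0 \<le> v \<bullet> (v :: real vec)"
  unfolding scalar_prod_self by (intro sum_nonneg) auto

lemma vnorm_eq_sqrt_scalar_prod: "vnorm v = sqrt (v \<bullet> v)"
  unfolding vnorm_def scalar_prod_self ..

lemma sym_mat_entry:
  assumes "sym_mat P" "i < dim_row P" "j < dim_row P"
  shows "P $$ (i,j) = P $$ (j,i)"
proof -
  have t: "transpose_mat P = P" and d: "dim_col P = dim_row P"
    using assms(1) unfolding sym_mat_def by auto
  have "P $$ (i,j) = transpose_mat P $$ (i,j)" by (simp only: t)
  also have "\<dots> = P $$ (j,i)" using assms(2,3) d by simp
  finally show ?thesis .
qed

lemma pos_def_carrier: "pos_def P \<Longrightarrow> P \<in> carrier_mat (dim_row P) (dim_row P)"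
  unfolding pos_def_def sym_mat_def carrier_mat_def by auto

lemma pos_def_nonneg:
  assumes "pos_def P" and "v \<in> carrier_vec (dim_row P)"
  shows "0 \<le> v \<bullet> (P *\<^sub>v v)"
proof (cases "v = 0\<^sub>v (dim_row P)")
  case True
  have "P *\<^sub>v v \<in> carrier_vec (dim_row P)"
    using pos_def_carrier[OF assms(1)] assms(2) by (rule mult_mat_vec_carrier)
  then show ?thesis using scalar_prod_left_zero True by simp
next
  case False
  then have "0 < v \<bullet> (P *\<^sub>v v)" using assms unfolding pos_def_def by blast
  then show ?thesis by simp
qed

lemma pos_def_qform:
  assumes "pos_def P"
  shows "\<forall>i<dim_row P. \<forall>j<dim_row P. P $$ (i,j) = P $$ (j,i)"
    and "\<And>x. 0 \<le> qform (dim_row P) (\<lambda>i j. P $$ (i,j)) x"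
    and "\<And>x. \<exists>i<dim_row P. x i \<noteq> 0 \<Longrightarrow> 0 < qform (dim_row P) (\<lambda>i j. P $$ (i,j)) x"
proof -
  note carrier = pos_def_carrier[OF assms]
  have "sym_mat P" using assms unfolding pos_def_def by blast
  then show "\<forall>i<dim_row P. \<forall>j<dim_row P. P $$ (i,j) = P $$ (j,i)"
    using sym_mat_entry by blast
  show "0 \<le> qform (dim_row P) (\<lambda>i j. P $$ (i,j)) x" for x :: "nat \<Rightarrow> real"
    unfolding qform_eq_scalar_prod_vec[OF carrier] by (rule pos_def_nonneg[OF assms]) simp
  fix x :: "nat \<Rightarrow> real" assume "\<exists>i<dim_row P. x i \<noteq> 0"
  then obtain i where "i < dim_row P" "vec (dim_row P) x $ i \<noteq> 0\<^sub>v (dim_row P) $ i" by auto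
  then have "vec (dim_row P) x \<noteq> 0\<^sub>v (dim_row P)" by metis
  then show "0 < qform (dim_row P) (\<lambda>i j. P $$ (i,j)) x"
    using assms vec_carrier unfolding qform_eq_scalar_prod_vec[OF carrier] pos_def_def by blast
qed

lemma pos_def_coercive:
  assumes "pos_def P"
  shows "\<exists>c>0. \<forall>v \<in> carrier_vec (dim_row P). c * (v \<bullet> v) \<le> v \<bullet> (P *\<^sub>v v)"
proof -
  obtain c where c: "0 < c"
    "\<forall>x. c * (\<Sum>i<dim_row P. (x i)^2) \<le> qform (dim_row P) (\<lambda>i j. P $$ (i,j)) x"
    using qform_coercive[OF pos_def_qform(1,3)[OF assms]] by blast
  show ?thesis
  proof (intro exI[of _ c] conjI ballI c(1))
    fix v :: "real vec" assume v: "v \<in> carrier_vec (dim_row P)"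
    then show "c * (v \<bullet> v) \<le> v \<bullet> (P *\<^sub>v v)"
      using c(2)[rule_format, of "\<lambda>i. v $ i"]
      unfolding scalar_prod_mult_mat_vec_eq_qform[OF pos_def_carrier[OF assms] v] scalar_prod_self
      by simp
  qed
qed

lemma scalar_prod_mult_mat_vec_le:
  fixes P :: "real mat"
  assumes P: "P \<in> carrier_mat n n"
  shows "\<exists>c>0. \<forall>v \<in> carrier_vec n. v \<bullet> (P *\<^sub>v v) \<le> c * (v \<bullet> v)"
proof -
  obtain c where c: "0 < c" "\<forall>x. qform n (\<lambda>i j. P $$ (i,j)) x \<le> c * (\<Sum>i<n. (x i)^2)"
    using qform_le_sum_squares by blast
  show ?thesis
  proof (intro exI[of _ c] conjI ballI c(1))
    fix v :: "real vec" assume v: "v \<in> carrier_vec n"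
    then show "v \<bullet> (P *\<^sub>v v) \<le> c * (v \<bullet> v)"
      using c(2)[rule_format, of "\<lambda>i. v $ i"]
      unfolding scalar_prod_mult_mat_vec_eq_qform[OF P v] scalar_prod_self
      by simp
  qed
qed

lemma pos_def_sqrt_add_le:
  fixes P :: "real mat"
  assumes P: "pos_def P" "P \<in> carrier_mat n n" and u: "u \<in> carrier_vec n" and v: "v \<in> carrier_vec n"
  shows "sqrt ((u + v) \<bullet> (P *\<^sub>v (u + v))) \<le> sqrt (u \<bullet> (P *\<^sub>v u)) + sqrt (v \<bullet> (P *\<^sub>v v))"
proof -
  have n: "dim_row P = n" using P(2) by simp
  have sym: "\<forall>i<n. \<forall>j<n. P $$ (i,j) = P $$ (j,i)" and psd: "\<And>x. 0 \<le> qform n (\<lambda>i j. P $$ (i,j)) x"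
    using pos_def_qform(1,2)[OF P(1)] unfolding n by auto
  have "(u + v) \<bullet> (P *\<^sub>v (u + v)) = qform n (\<lambda>i j. P $$ (i,j)) (\<lambda>i. u $ i + v $ i)"
    unfolding scalar_prod_mult_mat_vec_eq_qform[OF P(2) add_carrier_vec[OF u v]]
    using u v by (intro qform_cong) simp
  then show ?thesis
    unfolding scalar_prod_mult_mat_vec_eq_qform[OF P(2) u] scalar_prod_mult_mat_vec_eq_qform[OF P(2) v]
    using sqrt_qform_add_le[OF sym psd, of "\<lambda>i. u $ i" "\<lambda>i. v $ i"] by (simp only:)
qed

section \<open>Block matrices\<close>

lemma mult_mat_vec_uminus:
  fixes A :: "real mat"
  assumes "A \<in> carrier_mat n m" and "v \<in> carrier_vec m"
  shows "A *\<^sub>v (- v) = - (A *\<^sub>v v)"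
  using assms by (intro eq_vecI) (auto simp: scalar_prod_uminus_right)

lemma zero_mult_mat_vec [simp]: "v \<in> carrier_vec m \<Longrightarrow> 0\<^sub>m n m *\<^sub>v v = (0\<^sub>v n :: real vec)"
  by (intro eq_vecI) (auto simp: scalar_prod_def)

lemma mult_mat_vec_zero_right [simp]: "A \<in> carrier_mat n m \<Longrightarrow> A *\<^sub>v 0\<^sub>v m = (0\<^sub>v n :: real vec)"
  by (intro eq_vecI) auto

lemma hcat_carrier [intro]:
  "A \<in> carrier_mat n m1 \<Longrightarrow> B \<in> carrier_mat n m2 \<Longrightarrow> hcat A B \<in> carrier_mat n (m1 + m2)"
  unfolding hcat_def by auto

lemma hcat_mult_vec:
  fixes A B :: "real mat"
  assumes A: "A \<in> carrier_mat n m1" and B: "B \<in> carrier_mat n m2"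
    and a: "a \<in> carrier_vec m1" and b: "b \<in> carrier_vec m2"
  shows "hcat A B *\<^sub>v (a @\<^sub>v b) = A *\<^sub>v a + B *\<^sub>v b"
proof (rule eq_vecI)
  fix i assume "i < dim_vec (A *\<^sub>v a + B *\<^sub>v b)"
  then have i: "i < n" using B by simp
  have "row (hcat A B) i = row A i @\<^sub>v row B i"
    using A B i by (intro eq_vecI) (auto simp: hcat_def)
  then show "(hcat A B *\<^sub>v (a @\<^sub>v b)) $ i = (A *\<^sub>v a + B *\<^sub>v b) $ i"
    using i A B a b by (auto simp: hcat_def scalar_prod_append[of _ m1 _ m2])
qed (use A B in \<open>simp add: hcat_def\<close>)

lemma append_vec_assoc: "(a @\<^sub>v b) @\<^sub>v c = a @\<^sub>v (b @\<^sub>v c)"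
  by (intro eq_vecI) (auto simp: nth_append)

lemma hcat3_mult_vec:
  fixes X Y W :: "real mat"
  assumes "X \<in> carrier_mat n m1" "Y \<in> carrier_mat n m2" "W \<in> carrier_mat n m3"
    and "x \<in> carrier_vec m1" "y \<in> carrier_vec m2" "z \<in> carrier_vec m3"
  shows "hcat (hcat X Y) W *\<^sub>v (x @\<^sub>v (y @\<^sub>v z)) = X *\<^sub>v x + Y *\<^sub>v y + W *\<^sub>v z"
  unfolding append_vec_assoc[symmetric]
  using hcat_mult_vec[OF hcat_carrier[OF assms(1,2)] assms(3) append_carrier_vec[OF assms(4,5)] assms(6)]
      hcat_mult_vec[OF assms(1,2,4,5)] by simp

lemma bdiag_carrier [intro]:
  "A \<in> carrier_mat n n \<Longrightarrow> B \<in> carrier_mat m m \<Longrightarrow> bdiag A B \<in> carrier_mat (n + m) (n + m)"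
  unfolding bdiag_def by auto

lemma scalar_prod_four_block_mat:
  fixes A B C D :: "real mat"
  assumes A: "A \<in> carrier_mat n1 n1" and B: "B \<in> carrier_mat n1 n2"
    and C: "C \<in> carrier_mat n2 n1" and D: "D \<in> carrier_mat n2 n2"
    and a: "a \<in> carrier_vec n1" and b: "b \<in> carrier_vec n2"
  shows "(a @\<^sub>v b) \<bullet> (four_block_mat A B C D *\<^sub>v (a @\<^sub>v b))
       = a \<bullet> (A *\<^sub>v a) + a \<bullet> (B *\<^sub>v b) + b \<bullet> (C *\<^sub>v a) + b \<bullet> (D *\<^sub>v b)"
  using A B C D a b
  by (simp add: four_block_mat_mult_vec[OF A B C D a b] scalar_prod_append[of _ n1 _ n2]
      scalar_prod_add_distrib[of _ n1] scalar_prod_add_distrib[of _ n2] add.assoc)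

lemma scalar_prod_bdiag:
  fixes A D :: "real mat"
  assumes A: "A \<in> carrier_mat n1 n1" and D: "D \<in> carrier_mat n2 n2"
    and a: "a \<in> carrier_vec n1" and b: "b \<in> carrier_vec n2"
  shows "(a @\<^sub>v b) \<bullet> (bdiag A D *\<^sub>v (a @\<^sub>v b)) = a \<bullet> (A *\<^sub>v a) + b \<bullet> (D *\<^sub>v b)"
  unfolding bdiag_def using A D a b
  by (simp add: mult_mat_vec_split[OF A D a b] scalar_prod_append[of _ n1 _ n2])

lemma scalar_prod_four_block_mat_graph:
  fixes Gam Xi G :: "real mat"
  assumes Gam: "Gam \<in> carrier_mat n1 n1" and Xi: "Xi \<in> carrier_mat n2 n2"
    and G: "G \<in> carrier_mat n2 n1" and v: "v \<in> carrier_vec n1"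
  shows "(v @\<^sub>v (- (G *\<^sub>v v))) \<bullet> (four_block_mat Gam (transpose_mat G * Xi)
            (transpose_mat (transpose_mat G * Xi)) Xi *\<^sub>v (v @\<^sub>v (- (G *\<^sub>v v))))
       = v \<bullet> (Gam *\<^sub>v v) - (G *\<^sub>v v) \<bullet> (Xi *\<^sub>v (G *\<^sub>v v))"
proof -
  define g where "g = G *\<^sub>v v"
  have g: "g \<in> carrier_vec n2" unfolding g_def using G v by auto
  have Phi: "transpose_mat G * Xi \<in> carrier_mat n1 n2" using G Xi by auto
  have cross: "v \<bullet> (transpose_mat G *\<^sub>v (Xi *\<^sub>v g)) = g \<bullet> (Xi *\<^sub>v g)"
  proof -
    have "v \<bullet> (transpose_mat G *\<^sub>v (Xi *\<^sub>v g)) = (transpose_mat G *\<^sub>v (Xi *\<^sub>v g)) \<bullet> v"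
      by (rule comm_scalar_prod[of _ n1]) (use G Xi g v in auto)
    also have "\<dots> = (Xi *\<^sub>v g) \<bullet> g"
      unfolding g_def by (rule transpose_vec_mult_scalar[OF G v]) (use Xi G v in auto)
    also have "\<dots> = g \<bullet> (Xi *\<^sub>v g)"
      by (rule comm_scalar_prod[of _ n2]) (use Xi g in auto)
    finally show ?thesis .
  qed
  have cross': "g \<bullet> (transpose_mat (transpose_mat G * Xi) *\<^sub>v v) = g \<bullet> (Xi *\<^sub>v g)"
  proof -
    have "g \<bullet> (transpose_mat (transpose_mat G * Xi) *\<^sub>v v)
        = (transpose_mat (transpose_mat G * Xi) *\<^sub>v v) \<bullet> g"
      by (rule comm_scalar_prod[of _ n2]) (use Phi g v in auto)
    also have "\<dots> = v \<bullet> ((transpose_mat G * Xi) *\<^sub>v g)"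
      by (rule transpose_vec_mult_scalar[OF Phi g v])
    also have "\<dots> = v \<bullet> (transpose_mat G *\<^sub>v (Xi *\<^sub>v g))"
      using G Xi g by simp
    finally show ?thesis unfolding cross .
  qed
  show ?thesis
    unfolding g_def[symmetric] using Gam Xi G Phi v g
    by (simp add: scalar_prod_four_block_mat[of _ n1 _ n2] mult_mat_vec_uminus[of _ n1 n2]
        mult_mat_vec_uminus[of _ n2 n2] cross cross')
qed

section \<open>The LMI as a dissipation inequality\<close>

lemma sym_nonneg_block_entries:
  fixes L M N :: "real mat"
  assumes L: "L \<in> carrier_mat n n" and M: "M \<in> carrier_mat n n" and N: "N \<in> carrier_mat n n"
    and sym: "sym_mat (four_block_mat L N (transpose_mat N) M)"
    and nonneg: "nonneg_mat (four_block_mat L N (transpose_mat N) M)"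
    and ik: "i < n" "k < n"
  shows "L $$ (k,i) = L $$ (i,k)" "M $$ (k,i) = M $$ (i,k)"
    and "0 \<le> L $$ (i,k)" "0 \<le> M $$ (i,k)" "0 \<le> N $$ (i,k)"
proof -
  define Q where "Q = four_block_mat L N (transpose_mat N) M"
  have Q: "dim_row Q = n + n" "dim_col Q = n + n" unfolding Q_def using L M by auto
  have entries: "L $$ (i,k) = Q $$ (i,k)" "L $$ (k,i) = Q $$ (k,i)" "M $$ (i,k) = Q $$ (n + i, n + k)"
    "M $$ (k,i) = Q $$ (n + k, n + i)" "N $$ (i,k) = Q $$ (i, n + k)"
    unfolding Q_def using L M N ik by auto
  show "L $$ (k,i) = L $$ (i,k)" "M $$ (k,i) = M $$ (i,k)"
    unfolding entries using sym_mat_entry[of Q] sym Q ik unfolding Q_def by auto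
  show "0 \<le> L $$ (i,k)" "0 \<le> M $$ (i,k)" "0 \<le> N $$ (i,k)"
    unfolding entries using nonneg Q ik unfolding nonneg_mat_def Q_def by auto
qed

text \<open>The S-procedure: with \<open>[L, N; N\<^sup>T, M]\<close> symmetric and entrywise nonnegative, the difference of
  the two sides is \<open>(s+e)\<^sup>T L (s+e) + (s-e)\<^sup>T M (s-e) + (s+e)\<^sup>T N (s-e) + (s-e)\<^sup>T N\<^sup>T (s+e)\<close>,
  and the sector condition makes both \<open>s + e\<close> and \<open>s - e\<close> entrywise nonnegative.\<close>
lemma S_procedure_sector:
  fixes L M N Z :: "real mat" and s e :: "real vec"
  assumes L: "L \<in> carrier_mat n n" and M: "M \<in> carrier_mat n n"
    and N: "N \<in> carrier_mat n n" and Z: "Z \<in> carrier_mat n n"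
    and sym: "sym_mat (four_block_mat L N (transpose_mat N) M)"
    and nonneg: "nonneg_mat (four_block_mat L N (transpose_mat N) M)"
    and s: "s \<in> carrier_vec n" and e: "e \<in> carrier_vec n"
    and sector: "\<And>i. i < n \<Longrightarrow> \<bar>e $ i\<bar> \<le> s $ i"
  shows "e \<bullet> ((N + transpose_mat N + Z) *\<^sub>v e)
    \<le> (s @\<^sub>v e) \<bullet> (four_block_mat (L + M + (N + transpose_mat N)) (L - M - (N - transpose_mat N))
         (transpose_mat (L - M - (N - transpose_mat N))) (L + M + Z) *\<^sub>v (s @\<^sub>v e))"
proof -
  note entries = sym_nonneg_block_entries[OF L M N sym nonneg]
  define sp sm where "sp = (\<lambda>i. s $ i + e $ i)" and "sm = (\<lambda>i. s $ i - e $ i)"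
  define R11 R12 R22 where "R11 = L + M + (N + transpose_mat N)"
    and "R12 = L - M - (N - transpose_mat N)" and "R22 = L + M + Z"
  have R: "R11 \<in> carrier_mat n n" "R12 \<in> carrier_mat n n" "transpose_mat R12 \<in> carrier_mat n n"
    "R22 \<in> carrier_mat n n" "N + transpose_mat N + Z \<in> carrier_mat n n"
    unfolding R11_def R12_def R22_def using L M N Z by auto
  have "(s @\<^sub>v e) \<bullet> (four_block_mat R11 R12 (transpose_mat R12) R22 *\<^sub>v (s @\<^sub>v e))
      - e \<bullet> ((N + transpose_mat N + Z) *\<^sub>v e)
    = (\<Sum>i<n. \<Sum>k<n. s $ i * R11 $$ (i,k) * s $ k + s $ i * R12 $$ (i,k) * e $ k
        + e $ i * transpose_mat R12 $$ (i,k) * s $ k + e $ i * R22 $$ (i,k) * e $ k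
        - e $ i * (N + transpose_mat N + Z) $$ (i,k) * e $ k)"
    unfolding scalar_prod_four_block_mat[OF R(1-4) s e]
      scalar_prod_mult_mat_vec_sum[OF R(1) s s] scalar_prod_mult_mat_vec_sum[OF R(2) s e]
      scalar_prod_mult_mat_vec_sum[OF R(3) e s] scalar_prod_mult_mat_vec_sum[OF R(4) e e]
      scalar_prod_mult_mat_vec_sum[OF R(5) e e]
    by (simp add: sum.distrib sum_subtractf)
  also have "\<dots> = (\<Sum>i<n. \<Sum>k<n. sp i * L $$ (i,k) * sp k + sm i * M $$ (i,k) * sm k
        + sp i * N $$ (i,k) * sm k + sm i * N $$ (k,i) * sp k)"
  proof (intro sum.cong refl)
    fix i k assume "i \<in> {..<n}" "k \<in> {..<n}"
    then have ik: "i < n" "k < n" by auto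
    have "L $$ (k,i) = L $$ (i,k)" "M $$ (k,i) = M $$ (i,k)" using entries[OF ik] by auto
    then show "s $ i * R11 $$ (i,k) * s $ k + s $ i * R12 $$ (i,k) * e $ k
        + e $ i * transpose_mat R12 $$ (i,k) * s $ k + e $ i * R22 $$ (i,k) * e $ k
        - e $ i * (N + transpose_mat N + Z) $$ (i,k) * e $ k
      = sp i * L $$ (i,k) * sp k + sm i * M $$ (i,k) * sm k
        + sp i * N $$ (i,k) * sm k + sm i * N $$ (k,i) * sp k"
      using ik L M N Z by (simp add: R11_def R12_def R22_def sp_def sm_def algebra_simps)
  qed
  also have "\<dots> \<ge> 0"
  proof (intro sum_nonneg)
    fix i k assume "i \<in> {..<n}" "k \<in> {..<n}"
    then have ik: "i < n" "k < n" by auto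
    have "0 \<le> L $$ (i,k)" "0 \<le> M $$ (i,k)" "0 \<le> N $$ (i,k)" "0 \<le> N $$ (k,i)"
      using entries[OF ik] entries[OF ik(2,1)] by auto
    moreover have "0 \<le> sp i" "0 \<le> sm i" "0 \<le> sp k" "0 \<le> sm k"
      using sector[OF ik(1)] sector[OF ik(2)] by (auto simp: sp_def sm_def abs_le_iff)
    ultimately show "0 \<le> sp i * L $$ (i,k) * sp k + sm i * M $$ (i,k) * sm k
        + sp i * N $$ (i,k) * sm k + sm i * N $$ (k,i) * sp k"
      by (simp add: add_nonneg_nonneg)
  qed
  finally show ?thesis unfolding R11_def R12_def R22_def by simp
qed

lemma smult_mat_mult_vec:
  fixes X :: "real mat"
  shows "X \<in> carrier_mat n m \<Longrightarrow> v \<in> carrier_vec m \<Longrightarrow> (c \<cdot>\<^sub>m X) *\<^sub>v v = c \<cdot>\<^sub>v (X *\<^sub>v v)"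
  by (intro eq_vecI) (auto simp: scalar_prod_def sum_distrib_left mult.assoc)

lemma Lam_mult_vec:
  assumes "u \<in> carrier_vec ny" and "i < ny"
  shows "(Lam ny lam j *\<^sub>v u) $ i = lam i * j ! i * u $ i"
proof -
  have "(Lam ny lam j *\<^sub>v u) $ i = (\<Sum>k<ny. (if i = k then lam i * j ! i else 0) * u $ k)"
    using assms by (simp add: Lam_def scalar_prod_def atLeast0LessThan)
  also have "\<dots> = (\<Sum>k<ny. if i = k then lam i * j ! i * u $ i else 0)"
    by (intro sum.cong) auto
  finally show ?thesis using assms(2) by simp
qed

lemma block_rows_mult_vec:
  fixes X1 Y1 Z1 F X3 Y3 :: "real mat" and x w e :: "real vec"
  assumes X1: "X1 \<in> carrier_mat nx nx" and Y1: "Y1 \<in> carrier_mat nx nw" and Z1: "Z1 \<in> carrier_mat nx ny"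
    and F: "F \<in> carrier_mat nz nx" and X3: "X3 \<in> carrier_mat ny nx" and Y3: "Y3 \<in> carrier_mat ny nw"
    and x: "x \<in> carrier_vec nx" and w: "w \<in> carrier_vec nw" and e: "e \<in> carrier_vec ny"
  defines "G \<equiv> hcat (hcat X1 Y1) Z1 @\<^sub>r hcat (hcat F (0\<^sub>m nz nw)) (0\<^sub>m nz ny)
      @\<^sub>r hcat (hcat X3 Y3) (0\<^sub>m ny ny) @\<^sub>r hcat (hcat (0\<^sub>m ny nx) (0\<^sub>m ny nw)) (1\<^sub>m ny)"
  shows "G \<in> carrier_mat (nx + (nz + (ny + ny))) (nx + (nw + ny))"
    and "G *\<^sub>v (x @\<^sub>v (w @\<^sub>v e))
      = (X1 *\<^sub>v x + Y1 *\<^sub>v w + Z1 *\<^sub>v e) @\<^sub>v ((F *\<^sub>v x) @\<^sub>v ((X3 *\<^sub>v x + Y3 *\<^sub>v w) @\<^sub>v e))"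
proof -
  define G1 G2 G3 G4 where "G1 = hcat (hcat X1 Y1) Z1" and "G2 = hcat (hcat F (0\<^sub>m nz nw)) (0\<^sub>m nz ny)"
    and "G3 = hcat (hcat X3 Y3) (0\<^sub>m ny ny)" and "G4 = hcat (hcat (0\<^sub>m ny nx) (0\<^sub>m ny nw)) (1\<^sub>m ny)"
  have rows: "G1 \<in> carrier_mat nx (nx + (nw + ny))" "G2 \<in> carrier_mat nz (nx + (nw + ny))"
    "G3 \<in> carrier_mat ny (nx + (nw + ny))" "G4 \<in> carrier_mat ny (nx + (nw + ny))"
    unfolding G1_def G2_def G3_def G4_def add.assoc[symmetric] using assms
    by (auto intro!: hcat_carrier)
  have G34: "G3 @\<^sub>r G4 \<in> carrier_mat (ny + ny) (nx + (nw + ny))"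
    using rows(3,4) by (rule carrier_append_rows)
  have G234: "G2 @\<^sub>r G3 @\<^sub>r G4 \<in> carrier_mat (nz + (ny + ny)) (nx + (nw + ny))"
    using rows(2) G34 by (rule carrier_append_rows)
  show "G \<in> carrier_mat (nx + (nz + (ny + ny))) (nx + (nw + ny))"
    unfolding G_def G1_def[symmetric] G2_def[symmetric] G3_def[symmetric] G4_def[symmetric]
    using rows(1) G234 by (rule carrier_append_rows)
  have v: "x @\<^sub>v (w @\<^sub>v e) \<in> carrier_vec (nx + (nw + ny))" using x w e by auto
  have "G2 *\<^sub>v (x @\<^sub>v (w @\<^sub>v e)) = F *\<^sub>v x"
    unfolding G2_def using hcat3_mult_vec[OF F zero_carrier_mat zero_carrier_mat x w e] F x w e by simp
  moreover have "G3 *\<^sub>v (x @\<^sub>v (w @\<^sub>v e)) = X3 *\<^sub>v x + Y3 *\<^sub>v w"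
    unfolding G3_def using hcat3_mult_vec[OF X3 Y3 zero_carrier_mat x w e] X3 Y3 x w e by simp
  moreover have "G4 *\<^sub>v (x @\<^sub>v (w @\<^sub>v e)) = e"
    unfolding G4_def using hcat3_mult_vec[OF zero_carrier_mat zero_carrier_mat one_carrier_mat x w e] x w e
    by simp
  ultimately show "G *\<^sub>v (x @\<^sub>v (w @\<^sub>v e))
      = (X1 *\<^sub>v x + Y1 *\<^sub>v w + Z1 *\<^sub>v e) @\<^sub>v ((F *\<^sub>v x) @\<^sub>v ((X3 *\<^sub>v x + Y3 *\<^sub>v w) @\<^sub>v e))"
    unfolding G_def G1_def[symmetric] G2_def[symmetric] G3_def[symmetric] G4_def[symmetric]
      mat_mult_append[OF rows(1) G234 v] mat_mult_append[OF rows(2) G34 v] mat_mult_append[OF rows(3,4) v]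
    using hcat3_mult_vec[OF X1 Y1 Z1 x w e] unfolding G1_def by simp
qed

text \<open>The LMI matrix is \<open>[\<Gamma>, G\<^sup>T \<Xi>; \<Xi> G, \<Xi>]\<close>, where \<open>G\<close> maps \<open>(x, w, e)\<close> to
  \<open>(x\<^sup>+, F x, s, e)\<close>; \<open>vv = (x, w, e, -G (x, w, e))\<close> is the vector at which it is evaluated.\<close>
lemma LMI_mat_closed_loop_qform:
  fixes A B C D F P Kp Lj L M N Z :: "real mat" and x w e :: "real vec" and Dp sigma gamma :: real
  assumes A: "A \<in> carrier_mat nx nx" and B: "B \<in> carrier_mat nx nu"
    and C: "C \<in> carrier_mat ny nx" and D: "D \<in> carrier_mat ny nw"
    and F: "F \<in> carrier_mat nz nx" and P: "P \<in> carrier_mat nx nx"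
    and Kp: "Kp \<in> carrier_mat nu ny" and Lj: "Lj \<in> carrier_mat ny ny"
    and L: "L \<in> carrier_mat ny ny" and M: "M \<in> carrier_mat ny ny"
    and N: "N \<in> carrier_mat ny ny" and Z: "Z \<in> carrier_mat ny ny"
    and x: "x \<in> carrier_vec nx" and w: "w \<in> carrier_vec nw" and e: "e \<in> carrier_vec ny"
  defines "W \<equiv> LMI_mat nx nu ny nw nz A B C D F Kp Dp Lj sigma gamma P L M N Z"
    and "xn \<equiv> (A + B * Kp * C) *\<^sub>v x + (B * Kp * D) *\<^sub>v w + (B * Kp) *\<^sub>v e"
    and "s \<equiv> Dp \<cdot>\<^sub>v (Lj *\<^sub>v (C *\<^sub>v x + D *\<^sub>v w))"
    and "R \<equiv> four_block_mat (L + M + (N + transpose_mat N)) (L - M - (N - transpose_mat N))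
         (transpose_mat (L - M - (N - transpose_mat N))) (L + M + Z)"
  shows "\<exists>vv \<in> carrier_vec (dim_row W). x \<bullet> x \<le> vv \<bullet> vv \<and>
     vv \<bullet> (W *\<^sub>v vv) = sigma^2 * (x \<bullet> (P *\<^sub>v x)) + gamma^2 * (w \<bullet> w)
       + e \<bullet> ((N + transpose_mat N + Z) *\<^sub>v e)
       - (xn \<bullet> (P *\<^sub>v xn) + (F *\<^sub>v x) \<bullet> (F *\<^sub>v x) + (s @\<^sub>v e) \<bullet> (R *\<^sub>v (s @\<^sub>v e)))"
proof -
  define Gam where "Gam = bdiag ((sigma^2) \<cdot>\<^sub>m P) (bdiag ((gamma^2) \<cdot>\<^sub>m 1\<^sub>m nw) (N + transpose_mat N + Z))"
  define Xi where "Xi = bdiag P (bdiag (1\<^sub>m nz) R)"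
  define G where "G = hcat (hcat (A + B * Kp * C) (B * Kp * D)) (B * Kp)
      @\<^sub>r hcat (hcat F (0\<^sub>m nz nw)) (0\<^sub>m nz ny)
      @\<^sub>r hcat (hcat (Dp \<cdot>\<^sub>m (Lj * C)) (Dp \<cdot>\<^sub>m (Lj * D))) (0\<^sub>m ny ny)
      @\<^sub>r hcat (hcat (0\<^sub>m ny nx) (0\<^sub>m ny nw)) (1\<^sub>m ny)"
  have W_eq: "W = four_block_mat Gam (transpose_mat G * Xi) (transpose_mat (transpose_mat G * Xi)) Xi"
    unfolding W_def LMI_mat_def Let_def R_def Gam_def Xi_def G_def ..
  have R: "R \<in> carrier_mat (ny + ny) (ny + ny)" unfolding R_def using L M N Z by auto
  have Gam: "Gam \<in> carrier_mat (nx + (nw + ny)) (nx + (nw + ny))"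
    unfolding Gam_def using P N Z by (intro bdiag_carrier) auto
  have Xi: "Xi \<in> carrier_mat (nx + (nz + (ny + ny))) (nx + (nz + (ny + ny)))"
    unfolding Xi_def using P R by (intro bdiag_carrier) auto
  have blocks: "A + B * Kp * C \<in> carrier_mat nx nx" "B * Kp * D \<in> carrier_mat nx nw" "B * Kp \<in> carrier_mat nx ny"
    "Dp \<cdot>\<^sub>m (Lj * C) \<in> carrier_mat ny nx" "Dp \<cdot>\<^sub>m (Lj * D) \<in> carrier_mat ny nw"
    using A B C D Kp Lj by auto
  note G_blocks = block_rows_mult_vec[OF blocks(1-3) F blocks(4,5) x w e, folded G_def]
  have s_eq: "s = (Dp \<cdot>\<^sub>m (Lj * C)) *\<^sub>v x + (Dp \<cdot>\<^sub>m (Lj * D)) *\<^sub>v w"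
    unfolding s_def using C D Lj x w
    by (simp add: smult_mat_mult_vec[of _ ny nx] smult_mat_mult_vec[of _ ny nw]
        mult_add_distrib_mat_vec[of _ ny ny] smult_add_distrib_vec[of _ ny])
  define v where "v = x @\<^sub>v (w @\<^sub>v e)"
  have v: "v \<in> carrier_vec (nx + (nw + ny))" unfolding v_def using x w e by auto
  have Gv: "G *\<^sub>v v = xn @\<^sub>v ((F *\<^sub>v x) @\<^sub>v (s @\<^sub>v e))"
    unfolding v_def G_blocks(2) xn_def s_eq ..
  define vv where "vv = v @\<^sub>v (- (G *\<^sub>v v))"
  have "dim_row W = nx + (nw + ny) + (nx + (nz + (ny + ny)))"
    unfolding W_eq using four_block_carrier_mat[OF Gam Xi] by blast
  then have "vv \<in> carrier_vec (dim_row W)"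
    unfolding vv_def using v G_blocks(1) by (simp add: append_carrier_vec)
  moreover have "x \<bullet> x \<le> vv \<bullet> vv"
  proof -
    define r where "r = (w @\<^sub>v e) @\<^sub>v (- (G *\<^sub>v v))"
    have "vv = x @\<^sub>v r"
      unfolding vv_def v_def r_def by (rule append_vec_assoc)
    then have "vv \<bullet> vv = x \<bullet> x + r \<bullet> r"
      using scalar_prod_append[OF x carrier_vec_dim_vec x carrier_vec_dim_vec] by simp
    then show ?thesis using scalar_prod_self_nonneg[of r] by simp
  qed
  moreover have "vv \<bullet> (W *\<^sub>v vv) = v \<bullet> (Gam *\<^sub>v v) - (G *\<^sub>v v) \<bullet> (Xi *\<^sub>v (G *\<^sub>v v))"
    unfolding W_eq vv_def by (rule scalar_prod_four_block_mat_graph[OF Gam Xi G_blocks(1) v])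
  moreover have "v \<bullet> (Gam *\<^sub>v v) = sigma^2 * (x \<bullet> (P *\<^sub>v x)) + gamma^2 * (w \<bullet> w)
      + e \<bullet> ((N + transpose_mat N + Z) *\<^sub>v e)"
  proof -
    have NZ: "N + transpose_mat N + Z \<in> carrier_mat ny ny" using N Z by auto
    have sP: "sigma^2 \<cdot>\<^sub>m P \<in> carrier_mat nx nx" and gI: "gamma^2 \<cdot>\<^sub>m 1\<^sub>m nw \<in> carrier_mat nw nw"
      using P by auto
    show ?thesis
      unfolding Gam_def v_def
        scalar_prod_bdiag[OF sP bdiag_carrier[OF gI NZ] x append_carrier_vec[OF w e]]
        scalar_prod_bdiag[OF gI NZ w e] smult_mat_mult_vec[OF P x] smult_mat_mult_vec[OF one_carrier_mat w]
      using P x w by simp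
  qed
  moreover have "(G *\<^sub>v v) \<bullet> (Xi *\<^sub>v (G *\<^sub>v v))
      = xn \<bullet> (P *\<^sub>v xn) + (F *\<^sub>v x) \<bullet> (F *\<^sub>v x) + (s @\<^sub>v e) \<bullet> (R *\<^sub>v (s @\<^sub>v e))"
  proof -
    have xn: "xn \<in> carrier_vec nx" unfolding xn_def using blocks x w e by simp
    have Fx: "F *\<^sub>v x \<in> carrier_vec nz" using F x by simp
    have se: "s @\<^sub>v e \<in> carrier_vec (ny + ny)" unfolding s_eq using blocks x w e by simp
    show ?thesis
      unfolding Gv Xi_def
        scalar_prod_bdiag[OF P bdiag_carrier[OF one_carrier_mat R] xn append_carrier_vec[OF Fx se]]
        scalar_prod_bdiag[OF one_carrier_mat R Fx se]
      using Fx by simp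
  qed
  ultimately show ?thesis by auto
qed

lemma Lam_carrier: "Lam ny lam j \<in> carrier_mat ny ny"
  unfolding Lam_def by simp

lemma LMI_dissipation:
  fixes A B C D F P Kp L M N Z :: "real mat" and x w e :: "real vec"
  assumes A: "A \<in> carrier_mat nx nx" and B: "B \<in> carrier_mat nx nu"
    and C: "C \<in> carrier_mat ny nx" and D: "D \<in> carrier_mat ny nw"
    and F: "F \<in> carrier_mat nz nx" and P: "P \<in> carrier_mat nx nx"
    and Kp: "Kp \<in> carrier_mat nu ny"
    and L: "L \<in> carrier_mat ny ny" and M: "M \<in> carrier_mat ny ny"
    and N: "N \<in> carrier_mat ny ny" and Z: "Z \<in> carrier_mat ny ny"
    and sym: "sym_mat (four_block_mat L N (transpose_mat N) M)"
    and nonneg: "nonneg_mat (four_block_mat L N (transpose_mat N) M)"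
    and c: "0 \<le> c"
    and coercive: "\<forall>vv \<in> carrier_vec (dim_row (LMI_mat nx nu ny nw nz A B C D F Kp Dp (Lam ny lam j) sigma gamma P L M N Z)).
        c * (vv \<bullet> vv) \<le> vv \<bullet> (LMI_mat nx nu ny nw nz A B C D F Kp Dp (Lam ny lam j) sigma gamma P L M N Z *\<^sub>v vv)"
    and x: "x \<in> carrier_vec nx" and w: "w \<in> carrier_vec nw" and e: "e \<in> carrier_vec ny"
    and sign: "\<forall>i<ny. j ! i * (C *\<^sub>v x + D *\<^sub>v w) $ i = \<bar>(C *\<^sub>v x + D *\<^sub>v w) $ i\<bar>"
    and sector: "\<forall>i<ny. \<bar>e $ i\<bar> \<le> Dp * lam i * \<bar>(C *\<^sub>v x + D *\<^sub>v w) $ i\<bar>"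
  shows "((A + B * Kp * C) *\<^sub>v x + (B * Kp * D) *\<^sub>v w + (B * Kp) *\<^sub>v e) \<bullet>
           (P *\<^sub>v ((A + B * Kp * C) *\<^sub>v x + (B * Kp * D) *\<^sub>v w + (B * Kp) *\<^sub>v e))
         + (F *\<^sub>v x) \<bullet> (F *\<^sub>v x) + c * (x \<bullet> x)
       \<le> sigma^2 * (x \<bullet> (P *\<^sub>v x)) + gamma^2 * (w \<bullet> w)"
proof -
  define y where "y = C *\<^sub>v x + D *\<^sub>v w"
  define s where "s = Dp \<cdot>\<^sub>v (Lam ny lam j *\<^sub>v y)"
  have y: "y \<in> carrier_vec ny" unfolding y_def using C D x w by simp
  have s: "s \<in> carrier_vec ny" unfolding s_def using Lam_carrier[of ny lam j] y by simp
  have "\<bar>e $ i\<bar> \<le> s $ i" if "i < ny" for i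
    using sector sign that Lam_mult_vec[OF y that] Lam_carrier[of ny lam j]
    unfolding s_def y_def[symmetric] by (simp add: mult.assoc)
  then have S_proc: "e \<bullet> ((N + transpose_mat N + Z) *\<^sub>v e)
      \<le> (s @\<^sub>v e) \<bullet> (four_block_mat (L + M + (N + transpose_mat N)) (L - M - (N - transpose_mat N))
         (transpose_mat (L - M - (N - transpose_mat N))) (L + M + Z) *\<^sub>v (s @\<^sub>v e))"
    by (rule S_procedure_sector[OF L M N Z sym nonneg s e])
  obtain vv where vv: "vv \<in> carrier_vec (dim_row (LMI_mat nx nu ny nw nz A B C D F Kp Dp (Lam ny lam j) sigma gamma P L M N Z))"
    "x \<bullet> x \<le> vv \<bullet> vv"
    "vv \<bullet> (LMI_mat nx nu ny nw nz A B C D F Kp Dp (Lam ny lam j) sigma gamma P L M N Z *\<^sub>v vv)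
      = sigma^2 * (x \<bullet> (P *\<^sub>v x)) + gamma^2 * (w \<bullet> w) + e \<bullet> ((N + transpose_mat N + Z) *\<^sub>v e)
       - (((A + B * Kp * C) *\<^sub>v x + (B * Kp * D) *\<^sub>v w + (B * Kp) *\<^sub>v e) \<bullet>
           (P *\<^sub>v ((A + B * Kp * C) *\<^sub>v x + (B * Kp * D) *\<^sub>v w + (B * Kp) *\<^sub>v e))
         + (F *\<^sub>v x) \<bullet> (F *\<^sub>v x)
         + (s @\<^sub>v e) \<bullet> (four_block_mat (L + M + (N + transpose_mat N)) (L - M - (N - transpose_mat N))
             (transpose_mat (L - M - (N - transpose_mat N))) (L + M + Z) *\<^sub>v (s @\<^sub>v e)))"
    using LMI_mat_closed_loop_qform[OF A B C D F P Kp Lam_carrier L M N Z x w e] unfolding s_def y_def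
    by blast
  have "c * (x \<bullet> x) \<le> c * (vv \<bullet> vv)" using vv(2) c by (rule mult_left_mono)
  also have "\<dots> \<le> vv \<bullet> (LMI_mat nx nu ny nw nz A B C D F Kp Dp (Lam ny lam j) sigma gamma P L M N Z *\<^sub>v vv)"
    using coercive vv(1) by blast
  finally show ?thesis using vv(3) S_proc by linarith
qed

section \<open>The try-once-discard protocol\<close>

lemma Eprime_le_imp:
  assumes le: "Eprime e d l y \<le> ereal E" and l: "0 < l"
  shows "\<bar>e\<bar> \<le> E * l * \<bar>y\<bar> + d"
proof (cases "y = 0")
  case True
  then show ?thesis using le by (cases "\<bar>e\<bar> - d > 0") (auto simp: Eprime_def)
next
  case False
  then have "(\<bar>e\<bar> - d) / (l * \<bar>y\<bar>) \<le> E" and "0 < l * \<bar>y\<bar>"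
    using le l by (auto simp: Eprime_def)
  then show ?thesis by (simp add: pos_divide_le_eq mult.assoc)
qed

lemma protocol_step_untransmitted:
  assumes step: "protocol_step ny lam del dmin dmax yp y yn E" and ny: "0 < ny"
    and dmin: "dmin \<le> dmax"
  shows "\<exists>T. dmin \<le> E \<and> E \<le> dmax
    \<and> (\<forall>i<ny. i \<notin> T \<longrightarrow> Eprime (yp $ i - y $ i) (del i) (lam i) (y $ i) \<le> ereal E)
    \<and> yn = vec ny (\<lambda>i. if i \<in> T then y $ i else yp $ i)"
proof -
  define Ep where "Ep = (\<lambda>i. Eprime (yp $ i - y $ i) (del i) (lam i) (y $ i))"
  define m where "m = Max (Ep ` {..<ny})"
  from step obtain T where rule: "(if m < ereal dmin then T = {} \<and> E = dmin
        else if m \<ge> ereal dmax then T = {i \<in> {..<ny}. Ep i \<ge> ereal dmax} \<and> E = dmax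
        else (\<exists>i0 < ny. Ep i0 = m \<and> T = {i0}) \<and> E = real_of_ereal m)"
    and yn: "yn = vec ny (\<lambda>i. if i \<in> T then y $ i else yp $ i)"
    unfolding protocol_step_def Let_def Ep_def m_def by blast
  have le_m: "Ep i \<le> m" if "i < ny" for i unfolding m_def using that by (intro Max_ge) auto
  have "dmin \<le> E \<and> E \<le> dmax \<and> (\<forall>i<ny. i \<notin> T \<longrightarrow> Ep i \<le> ereal E)"
  proof (cases "m < ereal dmin")
    case True
    then show ?thesis using rule le_m dmin by (auto intro: order_trans less_imp_le)
  next
    case below: False
    show ?thesis
    proof (cases "m \<ge> ereal dmax")
      case True
      then show ?thesis using rule below dmin by auto
    next
      case False
      then have "m = ereal E" using rule below by (cases m) auto
      then show ?thesis using below False le_m by auto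
    qed
  qed
  then show ?thesis unfolding Ep_def using yn by blast
qed

lemma protocol_step_sector:
  assumes step: "protocol_step ny lam del dmin dmax yp y yn E" and ny: "0 < ny"
    and lam: "\<forall>i<ny. 0 < lam i" and del: "\<forall>i<ny. 0 \<le> del i"
    and dmin: "0 \<le> dmin" "dmin \<le> dmax"
  shows "dmin \<le> E \<and> E \<le> dmax \<and> (\<forall>i<ny. \<bar>yn $ i - y $ i\<bar> \<le> E * lam i * \<bar>y $ i\<bar> + del i)"
proof -
  obtain T where T: "dmin \<le> E" "E \<le> dmax"
    "\<forall>i<ny. i \<notin> T \<longrightarrow> Eprime (yp $ i - y $ i) (del i) (lam i) (y $ i) \<le> ereal E"
    and yn: "yn = vec ny (\<lambda>i. if i \<in> T then y $ i else yp $ i)"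
    using protocol_step_untransmitted[OF step ny dmin(2)] by blast
  have "\<bar>yn $ i - y $ i\<bar> \<le> E * lam i * \<bar>y $ i\<bar> + del i" if i: "i < ny" for i
  proof (cases "i \<in> T")
    case True
    have "0 \<le> E" "0 \<le> lam i" using T(1) dmin(1) lam i by auto
    then have "0 \<le> E * lam i * \<bar>y $ i\<bar>" by simp
    then show ?thesis using True i yn del by simp
  next
    case False
    then show ?thesis using T(3) i yn lam Eprime_le_imp by simp
  qed
  then show ?thesis using T(1,2) by blast
qed

lemma le_of_Suc_less_upto:
  fixes f :: "nat \<Rightarrow> real"
  assumes "\<forall>p<r. f p < f (Suc p)" and "a \<le> b" and "b \<le> r"
  shows "f a \<le> f b"
proof (rule lift_Suc_mono_le_ivl[of "{..<r}" f a b])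
  show "f n \<le> f (Suc n)" if "n \<in> {..<r}" for n using assms(1) that by (simp add: less_imp_le)
qed (use assms(2,3) in auto)

lemma Eint_cover:
  fixes Dl :: "nat \<Rightarrow> real"
  assumes r: "1 \<le> r" and incr: "\<forall>p<r. Dl p < Dl (Suc p)"
    and E: "Dl 0 \<le> E" "E \<le> Dl r"
  shows "\<exists>p\<in>{1..r}. E \<in> Eint Dl p"
proof (cases "E \<le> Dl 1")
  case True
  then show ?thesis using E r by (intro bexI[of _ 1]) (auto simp: Eint_def)
next
  case False
  define p where "p = (LEAST p. E \<le> Dl p)"
  have "E \<le> Dl p" unfolding p_def by (rule LeastI[of _ r]) (rule E(2))
  moreover have "p \<le> r" unfolding p_def by (rule Least_le) (rule E(2))
  moreover have "2 \<le> p"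
  proof (rule ccontr)
    assume "\<not> 2 \<le> p"
    then have "p \<le> 1" by simp
    then have "Dl p \<le> Dl 1" using le_of_Suc_less_upto[OF incr _ r] by blast
    then show False using False \<open>E \<le> Dl p\<close> by simp
  qed
  moreover have "\<not> E \<le> Dl (p - 1)"
    unfolding p_def by (rule not_less_Least) (use \<open>2 \<le> p\<close> p_def in simp)
  ultimately show ?thesis by (intro bexI[of _ p]) (auto simp: Eint_def)
qed

lemma Eint_le: "E \<in> Eint Dl p \<Longrightarrow> E \<le> Dl p"
  unfolding Eint_def by (auto split: if_splits)

lemma finite_vinf_set: "finite (insert 0 {\<bar>v $ i\<bar> | i. i < dim_vec v})"
proof -
  have "{\<bar>v $ i\<bar> | i. i < dim_vec v} = (\<lambda>i. \<bar>v $ i\<bar>) ` {..<dim_vec v}" by auto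
  then show ?thesis by simp
qed

lemma abs_le_vinf: "i < dim_vec v \<Longrightarrow> \<bar>v $ i\<bar> \<le> vinf v"
  unfolding vinf_def by (intro Max_ge[OF finite_vinf_set]) auto

lemma vinf_nonneg: "0 \<le> vinf v"
  unfolding vinf_def by (intro Max_ge[OF finite_vinf_set]) auto

lemma vinf_le: "0 \<le> b \<Longrightarrow> \<forall>i<dim_vec v. \<bar>v $ i\<bar> \<le> b \<Longrightarrow> vinf v \<le> b"
  unfolding vinf_def by (subst Max_le_iff[OF finite_vinf_set]) auto

lemma abs_mult_mat_vec_le:
  fixes X :: "real mat"
  assumes X: "X \<in> carrier_mat n m" and v: "v \<in> carrier_vec m" and i: "i < n"
    and b: "\<forall>j<m. \<bar>v $ j\<bar> \<le> b"
  shows "\<bar>(X *\<^sub>v v) $ i\<bar> \<le> (\<Sum>j<m. \<bar>X $$ (i,j)\<bar>) * b"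
proof -
  have "\<bar>(X *\<^sub>v v) $ i\<bar> = \<bar>\<Sum>j<m. X $$ (i,j) * v $ j\<bar>"
    using X v i by (simp add: scalar_prod_def atLeast0LessThan)
  also have "\<dots> \<le> (\<Sum>j<m. \<bar>X $$ (i,j)\<bar> * \<bar>v $ j\<bar>)" by (rule order_trans[OF sum_abs]) (simp add: abs_mult)
  also have "\<dots> \<le> (\<Sum>j<m. \<bar>X $$ (i,j)\<bar> * b)" using b by (intro sum_mono mult_left_mono) auto
  finally show ?thesis by (simp add: sum_distrib_right)
qed

lemma minf_nonneg_and_bound:
  fixes X :: "real mat"
  assumes X: "X \<in> carrier_mat n m"
  shows "0 \<le> minf X" and "\<And>v i. v \<in> carrier_vec m \<Longrightarrow> i < n \<Longrightarrow> \<bar>(X *\<^sub>v v) $ i\<bar> \<le> minf X * vinf v"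
proof -
  define S where "S = {vinf (X *\<^sub>v v) | v. v \<in> carrier_vec (dim_col X) \<and> vinf v \<le> 1}"
  define k where "k = Max (insert 0 ((\<lambda>i. \<Sum>j<m. \<bar>X $$ (i,j)\<bar>) ` {..<n}))"
  have k_nonneg: "0 \<le> k" unfolding k_def by (intro Max_ge) auto
  have "bdd_above S"
  proof (rule bdd_aboveI)
    fix a assume "a \<in> S"
    then obtain v where v: "v \<in> carrier_vec m" "vinf v \<le> 1" "a = vinf (X *\<^sub>v v)"
      unfolding S_def using X by auto
    have "\<bar>(X *\<^sub>v v) $ i\<bar> \<le> k" if "i < n" for i
    proof -
      have "\<bar>(X *\<^sub>v v) $ i\<bar> \<le> (\<Sum>j<m. \<bar>X $$ (i,j)\<bar>) * 1"
        using v abs_le_vinf[of _ v] that by (intro abs_mult_mat_vec_le[OF X v(1) that]) force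
      also have "\<dots> \<le> k" unfolding k_def using that by (intro Max_ge) auto
      finally show ?thesis .
    qed
    then show "a \<le> k" using v(3) X by (auto intro!: vinf_le k_nonneg)
  qed
  then have upper: "vinf (X *\<^sub>v v) \<le> minf X" if "v \<in> carrier_vec m" "vinf v \<le> 1" for v
    unfolding minf_def S_def[symmetric] using that X by (intro cSup_upper) (auto simp: S_def)
  show nonneg: "0 \<le> minf X"
    using upper[of "0\<^sub>v m"] vinf_nonneg[of "X *\<^sub>v 0\<^sub>v m"] vinf_le[of 1 "0\<^sub>v m"] by force
  fix v :: "real vec" and i assume v: "v \<in> carrier_vec m" and i: "i < n"
  show "\<bar>(X *\<^sub>v v) $ i\<bar> \<le> minf X * vinf v"
  proof (cases "vinf v = 0")
    case True
    then have "\<bar>(X *\<^sub>v v) $ i\<bar> \<le> (\<Sum>j<m. \<bar>X $$ (i,j)\<bar>) * 0"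
      using v abs_le_vinf[of _ v] by (intro abs_mult_mat_vec_le[OF X v i]) force
    then show ?thesis using True by simp
  next
    case False
    then have t: "0 < vinf v" using vinf_nonneg[of v] by simp
    define u where "u = (1 / vinf v) \<cdot>\<^sub>v v"
    have u: "u \<in> carrier_vec m" unfolding u_def using v by simp
    have "vinf u \<le> 1"
      using t abs_le_vinf[of _ v] by (intro vinf_le) (auto simp: u_def field_simps)
    then have "\<bar>(X *\<^sub>v u) $ i\<bar> \<le> minf X"
      using upper[OF u] abs_le_vinf[of i "X *\<^sub>v u"] X i by simp
    moreover have "(X *\<^sub>v u) $ i = (X *\<^sub>v v) $ i / vinf v"
      unfolding u_def mult_mat_vec[OF X v] using X i by simp
    ultimately show ?thesis using t by (simp add: divide_le_eq mult.commute)
  qed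
qed

lemma vnorm_mult_mat_vec_le:
  fixes X :: "real mat"
  assumes X: "X \<in> carrier_mat n m" and v: "v \<in> carrier_vec m" and b: "\<forall>j<m. \<bar>v $ j\<bar> \<le> b"
  shows "vnorm (X *\<^sub>v v) \<le> (\<Sum>i<n. \<Sum>j<m. \<bar>X $$ (i,j)\<bar>) * b"
proof -
  have "vnorm (X *\<^sub>v v) = L2_set (\<lambda>i. (X *\<^sub>v v) $ i) {..<n}"
    unfolding vnorm_def L2_set_def using X by simp
  also have "\<dots> \<le> (\<Sum>i<n. \<bar>(X *\<^sub>v v) $ i\<bar>)" by (rule L2_set_le_sum_abs)
  also have "\<dots> \<le> (\<Sum>i<n. (\<Sum>j<m. \<bar>X $$ (i,j)\<bar>) * b)"
    using abs_mult_mat_vec_le[OF X v _ b] by (intro sum_mono) auto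
  finally show ?thesis by (simp add: sum_distrib_right)
qed

lemma affine_recursion_bound:
  fixes q :: "nat \<Rightarrow> real"
  assumes a: "0 \<le> a" "a < 1" and b: "0 \<le> b" and step: "\<And>k. q (Suc k) \<le> a * q k + b"
  shows "q k \<le> a^k * q 0 + b / (1 - a)"
proof (induction k)
  case 0
  then show ?case using a b by simp
next
  case (Suc k)
  have "q (Suc k) \<le> a * (a^k * q 0 + b / (1 - a)) + b"
    using step[of k] mult_left_mono[OF Suc a(1)] by linarith
  also have "\<dots> = a^Suc k * q 0 + b / (1 - a)" using a by (simp add: field_simps)
  finally show ?case .
qed

lemma limsup_le_of_geometric_bound:
  fixes f :: "nat \<Rightarrow> real"
  assumes a: "0 \<le> a" "a < 1" and bound: "\<And>k. f k \<le> C * a^k + B"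
  shows "limsup (\<lambda>k. ereal (f k)) \<le> ereal B"
proof -
  have "(\<lambda>k. ereal (C * a^k + B)) \<longlonglongrightarrow> ereal (C * 0 + B)"
    using a by (intro tendsto_ereal tendsto_intros) auto
  then have "limsup (\<lambda>k. ereal (C * a^k + B)) = ereal (C * 0 + B)"
    by (rule lim_imp_Limsup[OF trivial_limit_sequentially])
  moreover have "limsup (\<lambda>k. ereal (f k)) \<le> limsup (\<lambda>k. ereal (C * a^k + B))"
    using bound by (intro Limsup_mono always_eventually) simp
  ultimately show ?thesis by simp
qed

lemma summable_of_dissipation:
  fixes V z s :: "nat \<Rightarrow> real"
  assumes V: "V 0 = 0" "\<And>k. 0 \<le> V k" and z: "\<And>k. 0 \<le> z k" and s: "\<And>k. 0 \<le> s k" "summable s"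
    and g: "0 \<le> g" and step: "\<And>k. V (Suc k) + z k \<le> V k + g * s k"
  shows "summable z" and "suminf z \<le> g * suminf s"
proof -
  have partial: "V n + (\<Sum>k<n. z k) \<le> g * (\<Sum>k<n. s k)" for n
  proof (induction n)
    case (Suc n)
    then show ?case using step[of n] by (simp add: algebra_simps)
  qed (simp add: V(1))
  have bound: "(\<Sum>k<n. z k) \<le> g * suminf s" for n
  proof -
    have "(\<Sum>k<n. z k) \<le> g * (\<Sum>k<n. s k)" using partial[of n] V(2)[of n] by linarith
    also have "\<dots> \<le> g * suminf s" using s g by (intro mult_left_mono sum_le_suminf) auto
    finally show ?thesis .
  qed
  show "summable z" by (rule summableI_nonneg_bounded[OF z bound])
  then show "suminf z \<le> g * suminf s" by (rule suminf_le_const[OF _ bound])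
qed

lemma clamp_split:
  fixes e a b :: real
  assumes "\<bar>e\<bar> \<le> a + b" "0 \<le> a" "0 \<le> b"
  shows "\<bar>max (- a) (min a e)\<bar> \<le> a" and "\<bar>e - max (- a) (min a e)\<bar> \<le> b"
  using assms by (auto simp: abs_le_iff max_def min_def)

text \<open>\<open>e\<close> is the error \<open>yh - c - d\<close> clipped componentwise to \<open>[-a\<^sub>i |c\<^sub>i|, a\<^sub>i |c\<^sub>i|]\<close>.\<close>
lemma sector_split:
  fixes yh c d :: "real vec"
  assumes yh: "yh \<in> carrier_vec n" and c: "c \<in> carrier_vec n" and d: "d \<in> carrier_vec n"
    and a: "\<And>i. i < n \<Longrightarrow> 0 \<le> a i" and dl: "\<And>i. i < n \<Longrightarrow> 0 \<le> dl i"
    and sector: "\<And>i. i < n \<Longrightarrow> \<bar>yh $ i - (c + d) $ i\<bar> \<le> a i * \<bar>(c + d) $ i\<bar> + dl i"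
  shows "\<exists>e r. e \<in> carrier_vec n \<and> r \<in> carrier_vec n \<and> yh = c + e + r
    \<and> (\<forall>i<n. \<bar>e $ i\<bar> \<le> a i * \<bar>c $ i\<bar>) \<and> (\<forall>i<n. \<bar>r $ i\<bar> \<le> (a i + 1) * \<bar>d $ i\<bar> + dl i)"
proof -
  define e where "e = vec n (\<lambda>i. max (- (a i * \<bar>c $ i\<bar>)) (min (a i * \<bar>c $ i\<bar>) (yh $ i - c $ i - d $ i)))"
  define r where "r = yh - c - e"
  have split: "\<bar>e $ i\<bar> \<le> a i * \<bar>c $ i\<bar> \<and> \<bar>(yh $ i - c $ i - d $ i) - e $ i\<bar> \<le> a i * \<bar>d $ i\<bar> + dl i"
    if i: "i < n" for i
  proof -
    have "\<bar>yh $ i - c $ i - d $ i\<bar> \<le> a i * \<bar>c $ i + d $ i\<bar> + dl i"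
      using sector[OF i] c d i by (simp add: algebra_simps)
    also have "\<dots> \<le> a i * \<bar>c $ i\<bar> + (a i * \<bar>d $ i\<bar> + dl i)"
      using mult_left_mono[OF abs_triangle_ineq[of "c $ i" "d $ i"] a[OF i]] by (simp add: distrib_left)
    finally show ?thesis
      unfolding e_def using clamp_split a[OF i] dl[OF i] i by simp
  qed
  have "yh = c + e + r" unfolding r_def using yh c by (intro eq_vecI) (auto simp: e_def)
  moreover have "\<bar>r $ i\<bar> \<le> (a i + 1) * \<bar>d $ i\<bar> + dl i" if i: "i < n" for i
  proof -
    have "r $ i = d $ i + ((yh $ i - c $ i - d $ i) - e $ i)" unfolding r_def using yh c i by (simp add: e_def)
    then have "\<bar>r $ i\<bar> \<le> \<bar>d $ i\<bar> + (a i * \<bar>d $ i\<bar> + dl i)" using split[OF i] by linarith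
    then show ?thesis by (simp add: algebra_simps)
  qed
  moreover have "e \<in> carrier_vec n" "r \<in> carrier_vec n" unfolding r_def e_def using yh c by auto
  ultimately show ?thesis using split by blast
qed

lemma closed_loop_mult_vec:
  fixes A B Kp C :: "real mat"
  assumes A: "A \<in> carrier_mat nx nx" and B: "B \<in> carrier_mat nx nu" and Kp: "Kp \<in> carrier_mat nu ny"
    and C: "C \<in> carrier_mat ny nx" and x: "x \<in> carrier_vec nx" and v: "v \<in> carrier_vec ny"
  shows "A *\<^sub>v x + B *\<^sub>v (Kp *\<^sub>v (C *\<^sub>v x + v)) = (A + B * Kp * C) *\<^sub>v x + (B * Kp) *\<^sub>v v"
proof -
  have BK: "B * Kp \<in> carrier_mat nx ny" using B Kp by simp
  have "Kp *\<^sub>v (C *\<^sub>v x + v) = Kp *\<^sub>v (C *\<^sub>v x) + Kp *\<^sub>v v"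
    using C x v by (intro mult_add_distrib_mat_vec[OF Kp]) auto
  then have "B *\<^sub>v (Kp *\<^sub>v (C *\<^sub>v x + v)) = (B * Kp) *\<^sub>v (C *\<^sub>v x) + (B * Kp) *\<^sub>v v"
    using B Kp C x v by (simp add: mult_add_distrib_mat_vec[OF B])
  moreover have "(A + B * Kp * C) *\<^sub>v x = A *\<^sub>v x + (B * Kp) *\<^sub>v (C *\<^sub>v x)"
    using A BK C x by (simp add: add_mult_distrib_mat_vec[of _ nx nx])
  ultimately show ?thesis
    using A BK C x v by (simp add: assoc_add_vec[of _ nx])
qed

lemma closed_loop_output_mult_vec:
  fixes A B Kp C D :: "real mat"
  assumes A: "A \<in> carrier_mat nx nx" and B: "B \<in> carrier_mat nx nu" and Kp: "Kp \<in> carrier_mat nu ny"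
    and C: "C \<in> carrier_mat ny nx" and D: "D \<in> carrier_mat ny nw"
    and x: "x \<in> carrier_vec nx" and w: "w \<in> carrier_vec nw" and e: "e \<in> carrier_vec ny"
  shows "A *\<^sub>v x + B *\<^sub>v (Kp *\<^sub>v (C *\<^sub>v x + D *\<^sub>v w + e))
    = (A + B * Kp * C) *\<^sub>v x + (B * Kp * D) *\<^sub>v w + (B * Kp) *\<^sub>v e"
proof -
  have BK: "B * Kp \<in> carrier_mat nx ny" using B Kp by simp
  have Dw: "D *\<^sub>v w \<in> carrier_vec ny" using D w by simp
  have "C *\<^sub>v x + D *\<^sub>v w + e = C *\<^sub>v x + (D *\<^sub>v w + e)"
    using C x Dw e by (intro assoc_add_vec) auto
  then have "A *\<^sub>v x + B *\<^sub>v (Kp *\<^sub>v (C *\<^sub>v x + D *\<^sub>v w + e))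
      = (A + B * Kp * C) *\<^sub>v x + ((B * Kp) *\<^sub>v (D *\<^sub>v w) + (B * Kp) *\<^sub>v e)"
    using closed_loop_mult_vec[OF A B Kp C x add_carrier_vec[OF Dw e]] mult_add_distrib_mat_vec[OF BK Dw e]
    by simp
  also have "(B * Kp) *\<^sub>v (D *\<^sub>v w) = (B * Kp * D) *\<^sub>v w"
    by (rule assoc_mult_mat_vec[symmetric, OF BK D w])
  also have "(A + B * Kp * C) *\<^sub>v x + ((B * Kp * D) *\<^sub>v w + (B * Kp) *\<^sub>v e)
      = (A + B * Kp * C) *\<^sub>v x + (B * Kp * D) *\<^sub>v w + (B * Kp) *\<^sub>v e"
  proof (rule assoc_add_vec[symmetric])
    show "(A + B * Kp * C) *\<^sub>v x \<in> carrier_vec nx"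
      by (rule mult_mat_vec_carrier[OF add_carrier_mat[OF mult_carrier_mat[OF BK C]] x])
    show "(B * Kp * D) *\<^sub>v w \<in> carrier_vec nx" by (rule mult_mat_vec_carrier[OF mult_carrier_mat[OF BK D] w])
    show "(B * Kp) *\<^sub>v e \<in> carrier_vec nx" by (rule mult_mat_vec_carrier[OF BK e])
  qed
  finally show ?thesis .
qed

lemma Jset_finite: "finite (Jset n)"
proof -
  have "Jset n \<subseteq> {xs. set xs \<subseteq> {1, -1} \<and> length xs = n}" unfolding Jset_def by auto
  then show ?thesis by (rule finite_subset) (simp add: finite_lists_length_eq)
qed

lemma sign_pattern_exists: "\<exists>j\<in>Jset n. \<forall>i<n. j ! i * y $ i = \<bar>y $ i :: real\<bar>"
proof
  show "map (\<lambda>i. if 0 \<le> y $ i then 1 else -1) [0..<n] \<in> Jset n" unfolding Jset_def by auto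
qed auto

lemma pos_def_contraction:
  fixes P :: "real mat"
  assumes P: "pos_def P" "P \<in> carrier_mat n n" and c: "0 < c" and sigma: "sigma^2 \<le> 1"
  shows "\<exists>\<nu>\<ge>0. \<nu> < 1 \<and> (\<forall>x\<in>carrier_vec n. \<forall>y\<in>carrier_vec n.
      y \<bullet> (P *\<^sub>v y) + c * (x \<bullet> x) \<le> sigma^2 * (x \<bullet> (P *\<^sub>v x))
      \<longrightarrow> sqrt (y \<bullet> (P *\<^sub>v y)) \<le> \<nu> * sqrt (x \<bullet> (P *\<^sub>v x)))"
proof -
  obtain c2 where c2: "0 < c2" "\<forall>v\<in>carrier_vec n. v \<bullet> (P *\<^sub>v v) \<le> c2 * (v \<bullet> v)"
    using scalar_prod_mult_mat_vec_le[OF P(2)] by blast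
  define \<mu> where "\<mu> = max 0 (1 - c / c2)"
  have \<mu>: "0 \<le> \<mu>" "\<mu> < 1" unfolding \<mu>_def using c c2(1) by auto
  show ?thesis
  proof (intro exI[of _ "sqrt \<mu>"] conjI ballI impI)
    show "0 \<le> sqrt \<mu>" "sqrt \<mu> < 1" using \<mu> by auto
    fix x y :: "real vec" assume x: "x \<in> carrier_vec n" and y: "y \<in> carrier_vec n"
      and dissip: "y \<bullet> (P *\<^sub>v y) + c * (x \<bullet> x) \<le> sigma^2 * (x \<bullet> (P *\<^sub>v x))"
    define V where "V = x \<bullet> (P *\<^sub>v x)"
    have V: "0 \<le> V" unfolding V_def using pos_def_nonneg[OF P(1)] x P(2) by simp
    have "(c / c2) * V \<le> (c / c2) * (c2 * (x \<bullet> x))"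
      using c2 x c unfolding V_def by (intro mult_left_mono) auto
    then have "(c / c2) * V \<le> c * (x \<bullet> x)" using c2(1) by simp
    moreover have "sigma^2 * V \<le> V" using sigma V by (simp add: mult_left_le_one_le)
    ultimately have "y \<bullet> (P *\<^sub>v y) \<le> (1 - c / c2) * V" using dissip unfolding V_def by argo
    also have "\<dots> \<le> \<mu> * V" unfolding \<mu>_def using V by (intro mult_right_mono) auto
    finally show "sqrt (y \<bullet> (P *\<^sub>v y)) \<le> sqrt \<mu> * sqrt (x \<bullet> (P *\<^sub>v x))"
      unfolding V_def by (metis real_sqrt_le_mono real_sqrt_mult)
  qed
qed

section \<open>The closed loop\<close>

locale switched_LMI =
  fixes nx nu ny nw nz r :: nat
    and A B C D F P :: "real mat"
    and K :: "nat \<Rightarrow> real mat"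
    and Dl lam :: "nat \<Rightarrow> real"
    and L M N Z :: "nat \<Rightarrow> real list \<Rightarrow> real mat"
    and sigma gamma :: real
  assumes ny_pos: "0 < ny"
    and A_dim: "A \<in> carrier_mat nx nx" and B_dim: "B \<in> carrier_mat nx nu"
    and C_dim: "C \<in> carrier_mat ny nx" and D_dim: "D \<in> carrier_mat ny nw"
    and F_dim: "F \<in> carrier_mat nz nx"
    and r_pos: "1 \<le> r"
    and Dl_nonneg: "0 \<le> Dl 0"
    and Dl_incr: "\<forall>p < r. Dl p < Dl (Suc p)"
    and K_dim: "\<forall>p \<in> {1..r}. K p \<in> carrier_mat nu ny"
    and lam_pos: "\<forall>i < ny. 0 < lam i"
    and sigma: "0 < sigma" "sigma \<le> 1"
    and gamma: "0 < gamma"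
    and P_dim: "P \<in> carrier_mat nx nx" and P_pd: "pos_def P"
    and LMN_dim: "\<forall>p \<in> {1..r}. \<forall>j \<in> Jset ny.
        L p j \<in> carrier_mat ny ny \<and> M p j \<in> carrier_mat ny ny \<and> N p j \<in> carrier_mat ny ny
        \<and> Z p j \<in> carrier_mat ny ny"
    and LMN_sym_nonneg: "\<forall>p \<in> {1..r}. \<forall>j \<in> Jset ny.
        sym_mat (four_block_mat (L p j) (N p j) (transpose_mat (N p j)) (M p j))
        \<and> nonneg_mat (four_block_mat (L p j) (N p j) (transpose_mat (N p j)) (M p j))"
    and LMI: "\<forall>p \<in> {1..r}. \<forall>j \<in> Jset ny.
        pos_def (LMI_mat nx nu ny nw nz A B C D F (K p) (Dl p) (Lam ny lam j) sigma gamma P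
                   (L p j) (M p j) (N p j) (Z p j))"
begin

abbreviation LMI_at :: "nat \<Rightarrow> real list \<Rightarrow> real mat" where
  "LMI_at p j \<equiv> LMI_mat nx nu ny nw nz A B C D F (K p) (Dl p) (Lam ny lam j) sigma gamma P
     (L p j) (M p j) (N p j) (Z p j)"

abbreviation LMI_coercive :: "real \<Rightarrow> bool" where
  "LMI_coercive c \<equiv> \<forall>p\<in>{1..r}. \<forall>j\<in>Jset ny. \<forall>v\<in>carrier_vec (dim_row (LMI_at p j)).
     c * (v \<bullet> v) \<le> v \<bullet> (LMI_at p j *\<^sub>v v)"

lemma LMI_uniformly_coercive: "\<exists>c>0. LMI_coercive c"
proof -
  define S where "S = {1..r} \<times> Jset ny"
  have "\<forall>pj\<in>S. \<exists>c>0. \<forall>v\<in>carrier_vec (dim_row (LMI_at (fst pj) (snd pj))).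
      c * (v \<bullet> v) \<le> v \<bullet> (LMI_at (fst pj) (snd pj) *\<^sub>v v)"
    unfolding S_def using LMI pos_def_coercive by auto
  then obtain cp where cp: "\<forall>pj\<in>S. 0 < cp pj \<and> (\<forall>v\<in>carrier_vec (dim_row (LMI_at (fst pj) (snd pj))).
      cp pj * (v \<bullet> v) \<le> v \<bullet> (LMI_at (fst pj) (snd pj) *\<^sub>v v))"
    by metis
  have S: "finite S" "S \<noteq> {}"
    using Jset_finite r_pos unfolding S_def Jset_def by (auto intro!: exI[of _ "replicate ny 1"])
  define c where "c = Min (cp ` S)"
  have "0 < c" unfolding c_def using S cp by (subst Min_gr_iff) auto
  moreover have "c * (v \<bullet> v) \<le> v \<bullet> (LMI_at p j *\<^sub>v v)"
    if "p \<in> {1..r}" "j \<in> Jset ny" "v \<in> carrier_vec (dim_row (LMI_at p j))" for p j v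
  proof -
    have pj: "(p, j) \<in> S" unfolding S_def using that by simp
    then have "c \<le> cp (p, j)" unfolding c_def using S by simp
    then have "c * (v \<bullet> v) \<le> cp (p, j) * (v \<bullet> v)" using scalar_prod_self_nonneg by (rule mult_right_mono)
    also have "\<dots> \<le> v \<bullet> (LMI_at p j *\<^sub>v v)" using bspec[OF cp pj] that(3) by simp
    finally show ?thesis .
  qed
  ultimately show ?thesis by blast
qed

lemma traj_facts:
  assumes "cl_traj nx nu ny nw A B C D Dl r K lam dl w yinit x u yh Ev"
  shows "x k \<in> carrier_vec nx" "w k \<in> carrier_vec nw" "u k \<in> carrier_vec nu"
    "yh k \<in> carrier_vec ny" "x (Suc k) = A *\<^sub>v x k + B *\<^sub>v u k"
    "protocol_step ny lam dl (Dl 0) (Dl r) (if k = 0 then yinit else yh (k - 1))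
       (C *\<^sub>v x k + D *\<^sub>v w k) (yh k) (Ev k)"
    "p \<in> {1..r} \<Longrightarrow> Ev k \<in> Eint Dl p \<Longrightarrow> u k = K p *\<^sub>v yh k"
  using assms unfolding cl_traj_def by auto

lemma Dl_nonneg_le: "p \<le> r \<Longrightarrow> 0 \<le> Dl p \<and> Dl p \<le> Dl r"
  using le_of_Suc_less_upto[OF Dl_incr, of 0 p] le_of_Suc_less_upto[OF Dl_incr, of p r] Dl_nonneg
  by auto

lemma traj_sector:
  assumes traj: "cl_traj nx nu ny nw A B C D Dl r K lam dl w yinit x u yh Ev"
    and dl: "\<forall>i<ny. 0 \<le> dl i"
  shows "\<exists>p\<in>{1..r}. u k = K p *\<^sub>v yh k \<and> (\<forall>i<ny. \<bar>yh k $ i - (C *\<^sub>v x k + D *\<^sub>v w k) $ i\<bar>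
      \<le> Dl p * lam i * \<bar>(C *\<^sub>v x k + D *\<^sub>v w k) $ i\<bar> + dl i)"
proof -
  define y where "y = C *\<^sub>v x k + D *\<^sub>v w k"
  have E: "Dl 0 \<le> Ev k" "Ev k \<le> Dl r"
    and sector: "\<forall>i<ny. \<bar>yh k $ i - y $ i\<bar> \<le> Ev k * lam i * \<bar>y $ i\<bar> + dl i"
    using protocol_step_sector[OF traj_facts(6)[OF traj] ny_pos lam_pos dl Dl_nonneg] Dl_nonneg_le[of 0]
    unfolding y_def by auto
  obtain p where p: "p \<in> {1..r}" "Ev k \<in> Eint Dl p" using Eint_cover[OF r_pos Dl_incr E] by blast
  have "\<bar>yh k $ i - y $ i\<bar> \<le> Dl p * lam i * \<bar>y $ i\<bar> + dl i" if i: "i < ny" for i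
  proof -
    have "Ev k * lam i * \<bar>y $ i\<bar> \<le> Dl p * lam i * \<bar>y $ i\<bar>"
      using Eint_le[OF p(2)] lam_pos i by (intro mult_right_mono) auto
    then show ?thesis using sector i by fastforce
  qed
  then show ?thesis using p traj_facts(7)[OF traj p] unfolding y_def by blast
qed

lemma LMI_step:
  fixes x w e :: "real vec"
  assumes p: "p \<in> {1..r}" and c: "0 \<le> c"
    and coercive: "\<forall>j\<in>Jset ny. \<forall>v\<in>carrier_vec (dim_row (LMI_at p j)). c * (v \<bullet> v) \<le> v \<bullet> (LMI_at p j *\<^sub>v v)"
    and x: "x \<in> carrier_vec nx" and w: "w \<in> carrier_vec nw" and e: "e \<in> carrier_vec ny"
    and sector: "\<forall>i<ny. \<bar>e $ i\<bar> \<le> Dl p * lam i * \<bar>(C *\<^sub>v x + D *\<^sub>v w) $ i\<bar>"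
  shows "((A + B * K p * C) *\<^sub>v x + (B * K p * D) *\<^sub>v w + (B * K p) *\<^sub>v e) \<bullet>
           (P *\<^sub>v ((A + B * K p * C) *\<^sub>v x + (B * K p * D) *\<^sub>v w + (B * K p) *\<^sub>v e))
         + (F *\<^sub>v x) \<bullet> (F *\<^sub>v x) + c * (x \<bullet> x)
       \<le> sigma^2 * (x \<bullet> (P *\<^sub>v x)) + gamma^2 * (w \<bullet> w)"
proof -
  obtain j where j: "j \<in> Jset ny" "\<forall>i<ny. j ! i * (C *\<^sub>v x + D *\<^sub>v w) $ i = \<bar>(C *\<^sub>v x + D *\<^sub>v w) $ i\<bar>"
    using sign_pattern_exists by blast
  have dims: "K p \<in> carrier_mat nu ny" "L p j \<in> carrier_mat ny ny" "M p j \<in> carrier_mat ny ny"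
    "N p j \<in> carrier_mat ny ny" "Z p j \<in> carrier_mat ny ny"
    using K_dim LMN_dim p j(1) by auto
  have "sym_mat (four_block_mat (L p j) (N p j) (transpose_mat (N p j)) (M p j))"
    "nonneg_mat (four_block_mat (L p j) (N p j) (transpose_mat (N p j)) (M p j))"
    using LMN_sym_nonneg p j(1) by auto
  then show ?thesis
    by (rule LMI_dissipation[OF A_dim B_dim C_dim D_dim F_dim P_dim dims _ _ c bspec[OF coercive j(1)]
        x w e j(2) sector])
qed

lemma nominal_dissipation:
  assumes traj: "cl_traj nx nu ny nw A B C D Dl r K lam (\<lambda>_. 0) w yinit x u yh Ev"
  shows "x (Suc k) \<bullet> (P *\<^sub>v x (Suc k)) + (F *\<^sub>v x k) \<bullet> (F *\<^sub>v x k)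
      \<le> sigma^2 * (x k \<bullet> (P *\<^sub>v x k)) + gamma^2 * (w k \<bullet> w k)"
proof -
  note tr = traj_facts[OF traj, of k]
  obtain p where p: "p \<in> {1..r}" "u k = K p *\<^sub>v yh k"
    and sector: "\<forall>i<ny. \<bar>yh k $ i - (C *\<^sub>v x k + D *\<^sub>v w k) $ i\<bar>
      \<le> Dl p * lam i * \<bar>(C *\<^sub>v x k + D *\<^sub>v w k) $ i\<bar> + 0"
    using traj_sector[OF traj, of k] by auto
  define e where "e = yh k - (C *\<^sub>v x k + D *\<^sub>v w k)"
  have Kp: "K p \<in> carrier_mat nu ny" using K_dim p(1) by blast
  have Dw: "D *\<^sub>v w k \<in> carrier_vec ny" using D_dim tr(2) by simp
  have e: "e \<in> carrier_vec ny" unfolding e_def using C_dim tr(1,4) Dw by simp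
  have "yh k = C *\<^sub>v x k + D *\<^sub>v w k + e"
    unfolding e_def using C_dim D_dim tr(1,4) Dw by (intro eq_vecI) auto
  then have x_Suc: "x (Suc k) = (A + B * K p * C) *\<^sub>v x k + (B * K p * D) *\<^sub>v w k + (B * K p) *\<^sub>v e"
    using tr(5) p(2) closed_loop_output_mult_vec[OF A_dim B_dim Kp C_dim D_dim tr(1,2) e] by simp
  \<comment> \<open>Without noise, semidefiniteness of the LMI suffices.\<close>
  have "\<forall>j\<in>Jset ny. \<forall>v\<in>carrier_vec (dim_row (LMI_at p j)). 0 * (v \<bullet> v) \<le> v \<bullet> (LMI_at p j *\<^sub>v v)"
    using LMI p(1) pos_def_nonneg by simp
  moreover have "\<forall>i<ny. \<bar>e $ i\<bar> \<le> Dl p * lam i * \<bar>(C *\<^sub>v x k + D *\<^sub>v w k) $ i\<bar>"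
    using sector C_dim D_dim unfolding e_def by simp
  ultimately show ?thesis unfolding x_Suc using LMI_step[OF p(1) order_refl _ tr(1,2) e] by simp
qed

lemma perturbed_step:
  assumes c: "0 \<le> c" and coercive: "LMI_coercive c"
    and traj: "cl_traj nx nu ny nw A B C D Dl r K lam dl w yinit x u yh Ev" and dl: "\<forall>i<ny. 0 \<le> dl i"
  shows "\<exists>p\<in>{1..r}. \<exists>xh v. x (Suc k) = xh + (B * K p) *\<^sub>v v \<and> xh \<in> carrier_vec nx \<and> v \<in> carrier_vec ny
     \<and> xh \<bullet> (P *\<^sub>v xh) + c * (x k \<bullet> x k) \<le> sigma^2 * (x k \<bullet> (P *\<^sub>v x k))
     \<and> (\<forall>i<ny. \<bar>v $ i\<bar> \<le> (Dl p * lam i + 1) * \<bar>(D *\<^sub>v w k) $ i\<bar> + dl i)"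
proof -
  note tr = traj_facts[OF traj, of k]
  obtain p where p: "p \<in> {1..r}" "u k = K p *\<^sub>v yh k"
    and sector: "\<forall>i<ny. \<bar>yh k $ i - (C *\<^sub>v x k + D *\<^sub>v w k) $ i\<bar>
      \<le> Dl p * lam i * \<bar>(C *\<^sub>v x k + D *\<^sub>v w k) $ i\<bar> + dl i"
    using traj_sector[OF traj dl, of k] by blast
  have Kp: "K p \<in> carrier_mat nu ny" using K_dim p(1) by blast
  have BK: "B * K p \<in> carrier_mat nx ny" using B_dim Kp by simp
  have Cx: "C *\<^sub>v x k \<in> carrier_vec ny" using C_dim tr(1) by simp
  have Dw: "D *\<^sub>v w k \<in> carrier_vec ny" using D_dim tr(2) by simp
  have gain: "0 \<le> Dl p * lam i" if "i < ny" for i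
    using Dl_nonneg_le[of p] p(1) lam_pos that by (simp add: less_imp_le)
  have "\<exists>e v. e \<in> carrier_vec ny \<and> v \<in> carrier_vec ny \<and> yh k = C *\<^sub>v x k + e + v
    \<and> (\<forall>i<ny. \<bar>e $ i\<bar> \<le> Dl p * lam i * \<bar>(C *\<^sub>v x k) $ i\<bar>)
    \<and> (\<forall>i<ny. \<bar>v $ i\<bar> \<le> (Dl p * lam i + 1) * \<bar>(D *\<^sub>v w k) $ i\<bar> + dl i)"
    by (rule sector_split[OF tr(4) Cx Dw, of "\<lambda>i. Dl p * lam i" dl]) (use gain dl sector in auto)
  then obtain e v where e: "e \<in> carrier_vec ny" and v: "v \<in> carrier_vec ny" and yh: "yh k = C *\<^sub>v x k + e + v"
    and e_sector: "\<forall>i<ny. \<bar>e $ i\<bar> \<le> Dl p * lam i * \<bar>(C *\<^sub>v x k) $ i\<bar>"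
    and v_bound: "\<forall>i<ny. \<bar>v $ i\<bar> \<le> (Dl p * lam i + 1) * \<bar>(D *\<^sub>v w k) $ i\<bar> + dl i"
    by blast
  have ACx: "(A + B * K p * C) *\<^sub>v x k \<in> carrier_vec nx"
    using A_dim BK C_dim tr(1) by (intro mult_mat_vec_carrier[of _ nx nx]) auto
  define xh where "xh = (A + B * K p * C) *\<^sub>v x k + (B * K p) *\<^sub>v e"
  have xh: "xh \<in> carrier_vec nx" unfolding xh_def using ACx BK e by simp
  have "x (Suc k) = (A + B * K p * C) *\<^sub>v x k + (B * K p) *\<^sub>v (e + v)"
    using tr(5) p(2) yh closed_loop_mult_vec[OF A_dim B_dim Kp C_dim tr(1) add_carrier_vec[OF e v]]
      assoc_add_vec[OF Cx e v] by simp
  also have "\<dots> = xh + (B * K p) *\<^sub>v v"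
    unfolding xh_def mult_add_distrib_mat_vec[OF BK e v]
    by (rule assoc_add_vec[symmetric, OF ACx mult_mat_vec_carrier[OF BK e] mult_mat_vec_carrier[OF BK v]])
  finally have x_Suc: "x (Suc k) = xh + (B * K p) *\<^sub>v v" .
  have "C *\<^sub>v x k + D *\<^sub>v 0\<^sub>v nw = C *\<^sub>v x k" using C_dim D_dim Cx by simp
  then have "xh \<bullet> (P *\<^sub>v xh) + (F *\<^sub>v x k) \<bullet> (F *\<^sub>v x k) + c * (x k \<bullet> x k)
      \<le> sigma^2 * (x k \<bullet> (P *\<^sub>v x k)) + gamma^2 * (0\<^sub>v nw \<bullet> 0\<^sub>v nw)"
    using LMI_step[OF p(1) c _ tr(1) zero_carrier_vec e] coercive p(1) e_sector
    unfolding xh_def by (simp add: D_dim mult_mat_vec_zero_right[OF mult_carrier_mat[OF BK D_dim]] ACx)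
  then have "xh \<bullet> (P *\<^sub>v xh) + c * (x k \<bullet> x k) \<le> sigma^2 * (x k \<bullet> (P *\<^sub>v x k))"
    using scalar_prod_self_nonneg[of "F *\<^sub>v x k"] by simp
  then show ?thesis using p(1) x_Suc xh v v_bound by blast
qed

lemma disturbance_le_Max:
  assumes p: "p \<in> {1..r}" and i: "i < ny" and w: "w \<in> carrier_vec nw" and wbar: "vinf w \<le> wbar"
    and bound: "\<bar>v\<bar> \<le> (Dl p * lam i + 1) * \<bar>(D *\<^sub>v w) $ i\<bar> + dl i"
  shows "\<bar>v\<bar> \<le> Max ((\<lambda>i. (Dl r * lam i + 1) * wbar * minf D + dl i) ` {..<ny})"
proof -
  have "\<bar>(D *\<^sub>v w) $ i\<bar> \<le> minf D * wbar"
    using minf_nonneg_and_bound[OF D_dim] w i wbar by (meson mult_left_mono order_trans)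
  moreover have "0 \<le> Dl p * lam i + 1" "Dl p * lam i + 1 \<le> Dl r * lam i + 1"
    using Dl_nonneg_le[of p] p lam_pos i by (auto intro: mult_right_mono)
  ultimately have "(Dl p * lam i + 1) * \<bar>(D *\<^sub>v w) $ i\<bar> \<le> (Dl r * lam i + 1) * wbar * minf D"
    using mult_mono[of "Dl p * lam i + 1" "Dl r * lam i + 1" "\<bar>(D *\<^sub>v w) $ i\<bar>" "minf D * wbar"]
    by (simp add: mult.commute mult.left_commute)
  also have "\<dots> + dl i \<le> Max ((\<lambda>i. (Dl r * lam i + 1) * wbar * minf D + dl i) ` {..<ny})"
    using i by (intro Max_ge) auto
  finally show ?thesis using bound by simp
qed

lemma input_gain_bound:
  "\<exists>\<kappa>\<ge>0. \<forall>p\<in>{1..r}. \<forall>v\<in>carrier_vec ny. \<forall>b\<ge>0. (\<forall>i<ny. \<bar>v $ i\<bar> \<le> b) \<longrightarrow> vnorm ((B * K p) *\<^sub>v v) \<le> \<kappa> * b"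
proof (intro exI[of _ "\<Sum>p\<in>{1..r}. \<Sum>i<nx. \<Sum>j<ny. \<bar>(B * K p) $$ (i,j)\<bar>"] conjI ballI allI impI)
  show "0 \<le> (\<Sum>p\<in>{1..r}. \<Sum>i<nx. \<Sum>j<ny. \<bar>(B * K p) $$ (i,j)\<bar>)" by (simp add: sum_nonneg)
  fix p v and b :: real assume p: "p \<in> {1..r}" and v: "v \<in> carrier_vec ny" and b: "0 \<le> b"
    and vb: "\<forall>i<ny. \<bar>v $ i\<bar> \<le> b"
  have "vnorm ((B * K p) *\<^sub>v v) \<le> (\<Sum>i<nx. \<Sum>j<ny. \<bar>(B * K p) $$ (i,j)\<bar>) * b"
    using B_dim K_dim p v vb by (intro vnorm_mult_mat_vec_le) auto
  also have "\<dots> \<le> (\<Sum>p\<in>{1..r}. \<Sum>i<nx. \<Sum>j<ny. \<bar>(B * K p) $$ (i,j)\<bar>) * b"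
    using p b by (intro mult_right_mono member_le_sum) (auto intro: sum_nonneg)
  finally show "vnorm ((B * K p) *\<^sub>v v) \<le> (\<Sum>p\<in>{1..r}. \<Sum>i<nx. \<Sum>j<ny. \<bar>(B * K p) $$ (i,j)\<bar>) * b" .
qed

lemma sqrt_lyapunov_step:
  assumes c: "0 \<le> c" "LMI_coercive c"
    and contract: "\<forall>x\<in>carrier_vec nx. \<forall>y\<in>carrier_vec nx.
      y \<bullet> (P *\<^sub>v y) + c * (x \<bullet> x) \<le> sigma^2 * (x \<bullet> (P *\<^sub>v x))
      \<longrightarrow> sqrt (y \<bullet> (P *\<^sub>v y)) \<le> \<nu> * sqrt (x \<bullet> (P *\<^sub>v x))"
    and gain: "\<forall>p\<in>{1..r}. \<forall>v\<in>carrier_vec ny. \<forall>b\<ge>0. (\<forall>i<ny. \<bar>v $ i\<bar> \<le> b)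
      \<longrightarrow> vnorm ((B * K p) *\<^sub>v v) \<le> \<kappa> * b"
    and c2: "0 \<le> c2" "\<forall>v\<in>carrier_vec nx. v \<bullet> (P *\<^sub>v v) \<le> c2 * (v \<bullet> v)"
    and traj: "cl_traj nx nu ny nw A B C D Dl r K lam dl w yinit x u yh Ev" and dl: "\<forall>i<ny. 0 \<le> dl i"
    and wbar: "vinf (w k) \<le> wbar"
  shows "sqrt (x (Suc k) \<bullet> (P *\<^sub>v x (Suc k))) \<le> \<nu> * sqrt (x k \<bullet> (P *\<^sub>v x k))
    + sqrt c2 * (\<kappa> * Max ((\<lambda>i. (Dl r * lam i + 1) * wbar * minf D + dl i) ` {..<ny}))"
proof -
  define m where "m = Max ((\<lambda>i. (Dl r * lam i + 1) * wbar * minf D + dl i) ` {..<ny})"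
  note tr = traj_facts[OF traj, of k]
  obtain p xh v where p: "p \<in> {1..r}" and x_Suc: "x (Suc k) = xh + (B * K p) *\<^sub>v v"
    and xh: "xh \<in> carrier_vec nx" and v: "v \<in> carrier_vec ny"
    and dissip: "xh \<bullet> (P *\<^sub>v xh) + c * (x k \<bullet> x k) \<le> sigma^2 * (x k \<bullet> (P *\<^sub>v x k))"
    and v_bound: "\<forall>i<ny. \<bar>v $ i\<bar> \<le> (Dl p * lam i + 1) * \<bar>(D *\<^sub>v w k) $ i\<bar> + dl i"
    using perturbed_step[OF c traj dl] by blast
  have v_le: "\<forall>i<ny. \<bar>v $ i\<bar> \<le> m"
    unfolding m_def using disturbance_le_Max[OF p _ tr(2) wbar] v_bound by blast
  then have "0 \<le> m" using ny_pos by (meson abs_ge_zero order_trans)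
  define g where "g = (B * K p) *\<^sub>v v"
  have "K p \<in> carrier_mat nu ny" using K_dim p by blast
  then have g: "g \<in> carrier_vec nx" unfolding g_def using B_dim v by simp
  have "sqrt (g \<bullet> (P *\<^sub>v g)) \<le> sqrt (c2 * (g \<bullet> g))" using c2(2) g by (intro real_sqrt_le_mono) blast
  also have "\<dots> = sqrt c2 * vnorm g" by (simp add: vnorm_eq_sqrt_scalar_prod real_sqrt_mult)
  also have "\<dots> \<le> sqrt c2 * (\<kappa> * m)"
    using gain p v \<open>0 \<le> m\<close> v_le c2(1) unfolding g_def by (intro mult_left_mono) auto
  finally have "sqrt (g \<bullet> (P *\<^sub>v g)) \<le> sqrt c2 * (\<kappa> * m)" .
  moreover have "sqrt (xh \<bullet> (P *\<^sub>v xh)) \<le> \<nu> * sqrt (x k \<bullet> (P *\<^sub>v x k))"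
    using contract tr(1) xh dissip by blast
  moreover have "sqrt (x (Suc k) \<bullet> (P *\<^sub>v x (Suc k))) \<le> sqrt (xh \<bullet> (P *\<^sub>v xh)) + sqrt (g \<bullet> (P *\<^sub>v g))"
    unfolding x_Suc g_def[symmetric] by (rule pos_def_sqrt_add_le[OF P_pd P_dim xh g])
  ultimately show ?thesis unfolding m_def by linarith
qed

theorem practical_stability:
  assumes del: "\<forall>i<ny. 0 \<le> del i"
  shows "\<exists>rho \<ge> 0. \<forall>wbar \<ge> 0. \<forall>w yinit x u yh Ev.
        cl_traj nx nu ny nw A B C D Dl r K lam del w yinit x u yh Ev
        \<and> (\<forall>k. vinf (w k) \<le> wbar) \<longrightarrow>
        limsup (\<lambda>k. ereal (vnorm (x k)))
          \<le> ereal (rho * Max ((\<lambda>i. (Dl r * lam i + 1) * wbar * minf D + del i) ` {..<ny}))"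
proof -
  obtain c where c: "0 < c" "LMI_coercive c" using LMI_uniformly_coercive by blast
  have "sigma^2 \<le> 1" using sigma by (simp add: power_le_one)
  then obtain \<nu> where \<nu>: "0 \<le> \<nu>" "\<nu> < 1" and contract: "\<forall>x\<in>carrier_vec nx. \<forall>y\<in>carrier_vec nx.
      y \<bullet> (P *\<^sub>v y) + c * (x \<bullet> x) \<le> sigma^2 * (x \<bullet> (P *\<^sub>v x))
      \<longrightarrow> sqrt (y \<bullet> (P *\<^sub>v y)) \<le> \<nu> * sqrt (x \<bullet> (P *\<^sub>v x))"
    using pos_def_contraction[OF P_pd P_dim c(1)] by blast
  obtain \<kappa> where \<kappa>: "0 \<le> \<kappa>" and gain: "\<forall>p\<in>{1..r}. \<forall>v\<in>carrier_vec ny. \<forall>b\<ge>0.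
      (\<forall>i<ny. \<bar>v $ i\<bar> \<le> b) \<longrightarrow> vnorm ((B * K p) *\<^sub>v v) \<le> \<kappa> * b"
    using input_gain_bound by blast
  obtain c1 where c1: "0 < c1" "\<forall>v\<in>carrier_vec nx. c1 * (v \<bullet> v) \<le> v \<bullet> (P *\<^sub>v v)"
    using pos_def_coercive[OF P_pd] P_dim by auto
  obtain c2 where c2: "0 < c2" "\<forall>v\<in>carrier_vec nx. v \<bullet> (P *\<^sub>v v) \<le> c2 * (v \<bullet> v)"
    using scalar_prod_mult_mat_vec_le[OF P_dim] by blast
  define rho where "rho = sqrt c2 * \<kappa> / ((1 - \<nu>) * sqrt c1)"
  show ?thesis
  proof (intro exI[of _ rho] conjI allI impI)
    show "0 \<le> rho" unfolding rho_def using \<kappa> \<nu> c1 c2 by simp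
    fix wbar :: real assume "0 \<le> wbar"
    fix w yinit x u yh Ev
    assume "cl_traj nx nu ny nw A B C D Dl r K lam del w yinit x u yh Ev \<and> (\<forall>k. vinf (w k) \<le> wbar)"
    then have traj: "cl_traj nx nu ny nw A B C D Dl r K lam del w yinit x u yh Ev"
      and wbar: "\<And>k. vinf (w k) \<le> wbar" by auto
    define m where "m = Max ((\<lambda>i. (Dl r * lam i + 1) * wbar * minf D + del i) ` {..<ny})"
    define q where "q = (\<lambda>k. sqrt (x k \<bullet> (P *\<^sub>v x k)))"
    have "0 \<le> (Dl r * lam 0 + 1) * wbar * minf D + del 0"
      using Dl_nonneg_le[of r] lam_pos ny_pos \<open>0 \<le> wbar\<close> minf_nonneg_and_bound(1)[OF D_dim] del
      by (simp add: less_imp_le)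
    also have "\<dots> \<le> m" unfolding m_def using ny_pos by (intro Max_ge) auto
    finally have "0 \<le> m" .
    have step: "q (Suc k) \<le> \<nu> * q k + sqrt c2 * (\<kappa> * m)" for k
      unfolding q_def m_def
      by (rule sqrt_lyapunov_step[OF less_imp_le[OF c(1)] c(2) contract gain less_imp_le[OF c2(1)] c2(2) traj del wbar])
    have "0 \<le> sqrt c2 * (\<kappa> * m)" using \<kappa> c2(1) \<open>0 \<le> m\<close> by simp
    note q_bound = affine_recursion_bound[where q = q, OF \<nu> this step]
    have "vnorm (x k) \<le> (q 0 / sqrt c1) * \<nu>^k + rho * m" for k
    proof -
      have "c1 * (x k \<bullet> x k) \<le> x k \<bullet> (P *\<^sub>v x k)" using c1 traj_facts(1)[OF traj] by blast
      then have "sqrt c1 * vnorm (x k) \<le> q k"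
        unfolding q_def vnorm_eq_sqrt_scalar_prod by (metis real_sqrt_le_mono real_sqrt_mult)
      also have "\<dots> \<le> \<nu>^k * q 0 + sqrt c2 * (\<kappa> * m) / (1 - \<nu>)" by (rule q_bound)
      also have "\<dots> = sqrt c1 * ((q 0 / sqrt c1) * \<nu>^k + rho * m)"
      proof -
        have rearrange: "a * q0 + s2 * (\<kappa> * m) / (1 - \<nu>) = t * ((q0 / t) * a + s2 * \<kappa> / ((1 - \<nu>) * t) * m)"
          if "0 < t" for a q0 s2 t :: real using that \<nu>(2) by (simp add: field_simps)
        show ?thesis unfolding rho_def by (rule rearrange) (use c1(1) in simp)
      qed
      finally show ?thesis using c1(1) by simp
    qed
    then show "limsup (\<lambda>k. ereal (vnorm (x k))) \<le> ereal (rho * m)"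
      by (rule limsup_le_of_geometric_bound[OF \<nu>])
  qed
qed

theorem decay_rate:
  "\<exists>Mc \<ge> 1. \<forall>w yinit x u yh Ev.
      cl_traj nx nu ny nw A B C D Dl r K lam (\<lambda>_. 0) w yinit x u yh Ev \<and> (\<forall>k. w k = 0\<^sub>v nw) \<longrightarrow>
      (\<forall>k. vnorm (x k) \<le> Mc * sigma ^ k * vnorm (x 0))"
proof -
  obtain c1 where c1: "0 < c1" "\<forall>v\<in>carrier_vec nx. c1 * (v \<bullet> v) \<le> v \<bullet> (P *\<^sub>v v)"
    using pos_def_coercive[OF P_pd] P_dim by auto
  obtain c2 where c2: "0 < c2" "\<forall>v\<in>carrier_vec nx. v \<bullet> (P *\<^sub>v v) \<le> c2 * (v \<bullet> v)"
    using scalar_prod_mult_mat_vec_le[OF P_dim] by blast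
  show ?thesis
  proof (intro exI[of _ "max 1 (sqrt (c2 / c1))"] conjI allI impI)
    fix w yinit x u yh Ev k
    assume "cl_traj nx nu ny nw A B C D Dl r K lam (\<lambda>_. 0) w yinit x u yh Ev \<and> (\<forall>k. w k = 0\<^sub>v nw)"
    then have traj: "cl_traj nx nu ny nw A B C D Dl r K lam (\<lambda>_. 0) w yinit x u yh Ev"
      and w0: "\<And>k. w k = 0\<^sub>v nw" by auto
    note x = traj_facts(1)[OF traj]
    have V_decay: "x k \<bullet> (P *\<^sub>v x k) \<le> (sigma^2)^k * (x 0 \<bullet> (P *\<^sub>v x 0))" for k
    proof (induction k)
      case (Suc k)
      have "x (Suc k) \<bullet> (P *\<^sub>v x (Suc k)) \<le> sigma^2 * (x k \<bullet> (P *\<^sub>v x k))"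
        using nominal_dissipation[OF traj, of k] scalar_prod_self_nonneg[of "F *\<^sub>v x k"] w0[of k] by simp
      also have "\<dots> \<le> sigma^2 * ((sigma^2)^k * (x 0 \<bullet> (P *\<^sub>v x 0)))"
        using Suc by (intro mult_left_mono) auto
      finally show ?case by (simp add: mult.assoc)
    qed simp
    have "c1 * (x k \<bullet> x k) \<le> (sigma^2)^k * (c2 * (x 0 \<bullet> x 0))"
      using c1(2) x[of k] V_decay[of k] mult_left_mono[OF bspec[OF c2(2) x[of 0]], of "(sigma^2)^k"]
      by (meson order_trans zero_le_power2 zero_le_power)
    then have "x k \<bullet> x k \<le> (sqrt (c2 / c1) * sigma ^ k * vnorm (x 0))^2"
      using c1(1) c2(1) scalar_prod_self_nonneg[of "x 0"]
      by (simp add: vnorm_eq_sqrt_scalar_prod power_mult_distrib field_simps power_mult[symmetric])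
    then have "vnorm (x k) \<le> sqrt (c2 / c1) * sigma ^ k * vnorm (x 0)"
      unfolding vnorm_eq_sqrt_scalar_prod[of "x k"]
      by (rule real_le_lsqrt[rotated])
        (use sigma(1) c1(1) c2(1) scalar_prod_self_nonneg[of "x 0"] in \<open>simp add: vnorm_eq_sqrt_scalar_prod\<close>)
    also have "\<dots> \<le> max 1 (sqrt (c2 / c1)) * sigma ^ k * vnorm (x 0)"
      using sigma(1) scalar_prod_self_nonneg[of "x 0"]
      by (intro mult_right_mono) (auto simp: vnorm_eq_sqrt_scalar_prod)
    finally show "vnorm (x k) \<le> max 1 (sqrt (c2 / c1)) * sigma ^ k * vnorm (x 0)" .
  qed simp
qed

theorem l2_gain:
  "\<forall>w yinit x u yh Ev.
      cl_traj nx nu ny nw A B C D Dl r K lam (\<lambda>_. 0) w yinit x u yh Ev \<and> x 0 = 0\<^sub>v nx \<and> in_l2 w \<longrightarrow>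
      in_l2 (\<lambda>k. F *\<^sub>v x k) \<and> l2norm (\<lambda>k. F *\<^sub>v x k) \<le> gamma * l2norm w"
proof (intro allI impI)
  fix w yinit x u yh Ev
  assume "cl_traj nx nu ny nw A B C D Dl r K lam (\<lambda>_. 0) w yinit x u yh Ev \<and> x 0 = 0\<^sub>v nx \<and> in_l2 w"
  then have traj: "cl_traj nx nu ny nw A B C D Dl r K lam (\<lambda>_. 0) w yinit x u yh Ev"
    and x0: "x 0 = 0\<^sub>v nx" and w: "summable (\<lambda>k. (vnorm (w k))^2)" unfolding in_l2_def by auto
  have sq: "(vnorm v)^2 = v \<bullet> v" for v :: "real vec"
    unfolding vnorm_eq_sqrt_scalar_prod using scalar_prod_self_nonneg by simp
  have V_nonneg: "0 \<le> x k \<bullet> (P *\<^sub>v x k)" for k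
    using pos_def_nonneg[OF P_pd] traj_facts(1)[OF traj] P_dim by simp
  have "x (Suc k) \<bullet> (P *\<^sub>v x (Suc k)) + (vnorm (F *\<^sub>v x k))^2
      \<le> x k \<bullet> (P *\<^sub>v x k) + gamma^2 * (vnorm (w k))^2" for k
  proof -
    have "sigma^2 * (x k \<bullet> (P *\<^sub>v x k)) \<le> x k \<bullet> (P *\<^sub>v x k)"
      using sigma V_nonneg[of k] by (simp add: mult_left_le_one_le power_le_one)
    then show ?thesis using nominal_dissipation[OF traj, of k] unfolding sq by linarith
  qed
  from summable_of_dissipation[where V = "\<lambda>k. x k \<bullet> (P *\<^sub>v x k)", OF _ V_nonneg _ _ w _ this]
  have "summable (\<lambda>k. (vnorm (F *\<^sub>v x k))^2)"
    and le: "(\<Sum>k. (vnorm (F *\<^sub>v x k))^2) \<le> gamma^2 * (\<Sum>k. (vnorm (w k))^2)"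
    using x0 P_dim by auto
  moreover have "sqrt (gamma^2 * (\<Sum>k. (vnorm (w k))^2)) = gamma * l2norm w"
    unfolding l2norm_def using gamma by (simp add: real_sqrt_mult)
  ultimately show "in_l2 (\<lambda>k. F *\<^sub>v x k) \<and> l2norm (\<lambda>k. F *\<^sub>v x k) \<le> gamma * l2norm w"
    unfolding in_l2_def l2norm_def by (metis real_sqrt_le_mono)
qed

end

theorem theorem2:
  fixes nx nu ny nw nz r :: nat
    and A B C D F P :: "real mat"
    and K :: "nat \<Rightarrow> real mat"
    and Dl lam del :: "nat \<Rightarrow> real"
    and L M N Z :: "nat \<Rightarrow> real list \<Rightarrow> real mat"
    and sigma gamma :: real
  assumes ny_pos: "0 < ny"
    and A_dim: "A \<in> carrier_mat nx nx" and B_dim: "B \<in> carrier_mat nx nu"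
    and C_dim: "C \<in> carrier_mat ny nx" and D_dim: "D \<in> carrier_mat ny nw"
    and F_dim: "F \<in> carrier_mat nz nx"
    and r_pos: "1 \<le> r"
    and Dl_nonneg: "0 \<le> Dl 0"
    and Dl_incr: "\<forall>p < r. Dl p < Dl (Suc p)"
    and K_dim: "\<forall>p \<in> {1..r}. K p \<in> carrier_mat nu ny"
    and lam_pos: "\<forall>i < ny. 0 < lam i"
    and del_nonneg: "\<forall>i < ny. 0 \<le> del i"
    and sigma: "0 < sigma" "sigma \<le> 1"
    and gamma: "0 < gamma"
    and P_dim: "P \<in> carrier_mat nx nx" and P_pd: "pos_def P"
    and LMN_dim: "\<forall>p \<in> {1..r}. \<forall>j \<in> Jset ny.
        L p j \<in> carrier_mat ny ny \<and> M p j \<in> carrier_mat ny ny \<and> N p j \<in> carrier_mat ny ny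
        \<and> Z p j \<in> carrier_mat ny ny"
    and LMN_sym_nonneg: "\<forall>p \<in> {1..r}. \<forall>j \<in> Jset ny.
        sym_mat (four_block_mat (L p j) (N p j) (transpose_mat (N p j)) (M p j))
        \<and> nonneg_mat (four_block_mat (L p j) (N p j) (transpose_mat (N p j)) (M p j))"
    and Z_sym: "\<forall>p \<in> {1..r}. \<forall>j \<in> Jset ny. sym_mat (Z p j)"
    and LMI: "\<forall>p \<in> {1..r}. \<forall>j \<in> Jset ny.
        pos_def (LMI_mat nx nu ny nw nz A B C D F (K p) (Dl p) (Lam ny lam j) sigma gamma P
                   (L p j) (M p j) (N p j) (Z p j))"
  shows
    \<comment> \<open>(i) practical stability with ultimate bound of the stated form\<close>
    "(\<exists>rho \<ge> 0. \<forall>wbar \<ge> 0. \<forall>w yinit x u yh Ev.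
        cl_traj nx nu ny nw A B C D Dl r K lam del w yinit x u yh Ev
        \<and> (\<forall>k. vinf (w k) \<le> wbar) \<longrightarrow>
        limsup (\<lambda>k. ereal (vnorm (x k)))
          \<le> ereal (rho * Max ((\<lambda>i. (Dl r * lam i + 1) * wbar * minf D + del i) ` {..<ny})))
     \<and>
    \<comment> \<open>(ii) decay rate sigma (w = 0, delta = 0)\<close>
     (\<exists>Mc \<ge> 1. \<forall>w yinit x u yh Ev.
        cl_traj nx nu ny nw A B C D Dl r K lam (\<lambda>_. 0) w yinit x u yh Ev
        \<and> (\<forall>k. w k = 0\<^sub>v nw) \<longrightarrow>
        (\<forall>k. vnorm (x k) \<le> Mc * sigma ^ k * vnorm (x 0)))
     \<and>
    \<comment> \<open>(iii) l2-gain from w to z = F x at most gamma (x[0] = 0, delta = 0)\<close>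
     (\<forall>w yinit x u yh Ev.
        cl_traj nx nu ny nw A B C D Dl r K lam (\<lambda>_. 0) w yinit x u yh Ev
        \<and> x 0 = 0\<^sub>v nx \<and> in_l2 w \<longrightarrow>
        in_l2 (\<lambda>k. F *\<^sub>v x k) \<and> l2norm (\<lambda>k. F *\<^sub>v x k) \<le> gamma * l2norm w)"
proof -
  interpret switched_LMI nx nu ny nw nz r A B C D F P K Dl lam L M N Z sigma gamma
    by unfold_locales (fact ny_pos A_dim B_dim C_dim D_dim F_dim r_pos Dl_nonneg Dl_incr K_dim lam_pos
        sigma gamma P_dim P_pd LMN_dim LMN_sym_nonneg LMI)+
  show ?thesis using practical_stability[OF del_nonneg] decay_rate l2_gain by blast
qed

end
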